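(* Let ${\bf R}=(R_1,\dots,R_d)\in\mathbb R_+^d$, $u=\max\{R_1,\dots,R_d\}$, $v=\min\{R_1,\dots,R_d\}$, $p=\max\{\frac12,u\}$, $g({\bf R})=\frac{1}{1/R_1+\cdots+1/R_d}$, and $$E=4^{p/v}\,2^{u/v}\,(1+1/(2v))^{u/(2v^2)}\,(2ep)^{1/(2v)}.$$ Then for all integers $n>E^d$, $$2^{v-p}\sqrt{\frac{1}{e(d+2u)}}\le n^{g({\bf R})}\,a_n(I_d:W_2^{\bf R}(\mathbb T^d)\to L_2(\mathbb T^d))\le 2^{p+u}\Big(1+\frac{2v+1}{2v}\Big)^{\frac{u}{2v}}\sqrt{\frac{2eu}{d}}.$$
   Context: $\mathbb T^d$ carries the normalized Lebesgue measure, $\hat f({\bf k})$ are Fourier coefficients. $W_2^{\bf R}(\mathbb T^d)$ is the Hilbert space of $f\in L_2(\mathbb T^d)$ with norm $\big(\sum_{{\bf k}\in\mathbb Z^d}(1+\sum_{j=1}^d|k_j|^{2R_j})|\hat f({\bf k})|^2\big)^{1/2}$; $I_d$ is the identity embedding; $a_n(T)=\inf\{\|T-A\|:\operatorname{rank}A<n\}$ are the approximation numbers. *)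

theory Defs
  imports "HOL-Analysis.Analysis"
begin

text \<open>Fourier-side model: a function on the d-torus is represented by its
Fourier coefficient family indexed by Z^d. Z^d is modelled as the integer
sequences vanishing from index d on.\<close>

definition Zd :: "nat \<Rightarrow> (nat \<Rightarrow> int) set" where
  "Zd d = {k. \<forall>j\<ge>d. k j = 0}"

definition sob_weight :: "(nat \<Rightarrow> real) \<Rightarrow> nat \<Rightarrow> (nat \<Rightarrow> int) \<Rightarrow> real" where
  "sob_weight R d k = 1 + (\<Sum>j<d. \<bar>real_of_int (k j)\<bar> powr (2 * R j))"

text \<open>L_2(T^d), via Parseval: square-summable coefficient families.\<close>
definition L2seq :: "nat \<Rightarrow> ((nat \<Rightarrow> int) \<Rightarrow> complex) set" where
  "L2seq d = {c. (\<forall>k. k \<notin> Zd d \<longrightarrow> c k = 0) \<and>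
                 (\<lambda>k. (cmod (c k))^2) summable_on Zd d}"

definition L2norm :: "nat \<Rightarrow> ((nat \<Rightarrow> int) \<Rightarrow> complex) \<Rightarrow> real" where
  "L2norm d c = sqrt (\<Sum>\<^sub>\<infinity>k\<in>Zd d. (cmod (c k))^2)"

text \<open>W_2^R(T^d) with the norm from the paper, on the Fourier side.\<close>
definition Wseq :: "(nat \<Rightarrow> real) \<Rightarrow> nat \<Rightarrow> ((nat \<Rightarrow> int) \<Rightarrow> complex) set" where
  "Wseq R d = {c. (\<forall>k. k \<notin> Zd d \<longrightarrow> c k = 0) \<and>
                 (\<lambda>k. sob_weight R d k * (cmod (c k))^2) summable_on Zd d}"

definition Wnorm :: "(nat \<Rightarrow> real) \<Rightarrow> nat \<Rightarrow> ((nat \<Rightarrow> int) \<Rightarrow> complex) \<Rightarrow> real" where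
  "Wnorm R d c = sqrt (\<Sum>\<^sub>\<infinity>k\<in>Zd d. sob_weight R d k * (cmod (c k))^2)"

definition op_norm_WL2 :: "(nat \<Rightarrow> real) \<Rightarrow> nat \<Rightarrow>
    (((nat \<Rightarrow> int) \<Rightarrow> complex) \<Rightarrow> ((nat \<Rightarrow> int) \<Rightarrow> complex)) \<Rightarrow> real" where
  "op_norm_WL2 R d F = Sup {L2norm d (F c) | c. c \<in> Wseq R d \<and> Wnorm R d c \<le> 1}"

definition bounded_linear_WL2 :: "(nat \<Rightarrow> real) \<Rightarrow> nat \<Rightarrow>
    (((nat \<Rightarrow> int) \<Rightarrow> complex) \<Rightarrow> ((nat \<Rightarrow> int) \<Rightarrow> complex)) \<Rightarrow> bool" where
  "bounded_linear_WL2 R d A \<longleftrightarrow>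
     (\<forall>x\<in>Wseq R d. \<forall>y\<in>Wseq R d. \<forall>a b::complex.
        A (\<lambda>k. a * x k + b * y k) = (\<lambda>k. a * A x k + b * A y k)) \<and>
     (\<exists>C. \<forall>c\<in>Wseq R d. L2norm d (A c) \<le> C * Wnorm R d c)"

definition rank_lt_WL2 :: "(nat \<Rightarrow> real) \<Rightarrow> nat \<Rightarrow> nat \<Rightarrow>
    (((nat \<Rightarrow> int) \<Rightarrow> complex) \<Rightarrow> ((nat \<Rightarrow> int) \<Rightarrow> complex)) \<Rightarrow> bool" where
  "rank_lt_WL2 R d n A \<longleftrightarrow>
     (\<exists>B. finite B \<and> card B < n \<and> B \<subseteq> L2seq d \<and>
        (\<forall>c\<in>Wseq R d. \<exists>\<alpha>. A c = (\<lambda>k. \<Sum>b\<in>B. \<alpha> b * b k)))"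

definition approx_num :: "(nat \<Rightarrow> real) \<Rightarrow> nat \<Rightarrow> nat \<Rightarrow> real" where
  "approx_num R d n = Inf {op_norm_WL2 R d (\<lambda>c k. c k - A c k) | A.
       bounded_linear_WL2 R d A \<and> rank_lt_WL2 R d n A}"

end

theory Submission
  imports Defs
begin

text \<open>
  On the Fourier side \<open>I\<^sub>d\<close> is diagonal: the coefficient at \<open>k\<close> is damped by
  w(k)^(-1/2), where w(k) = 1 + \<Sum>_j |k_j|^(2 R_j).

  Upper bound: the projection onto the frequencies with \<Sum>_j |k_j|^(2 R_j) < s has rank
  equal to their number and error at most (1 + s)^(-1/2). Rankin's trick bounds that
  number by e^(\<lambda> s) \<Prod>_j \<Sum>_m exp (-\<lambda> |m|^(2 R_j)), and each one-dimensional sum is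
  at most 1 + 2 c(2 R_j) \<lambda>^(-1/(2 R_j)). For s = (n^g / UB)^2 and \<lambda> = (\<Sum>_j 1/(2 R_j)) / s
  every factor stays below (n^(2g)/e)^(1/(2 R_j)) once n > E^d, so fewer than n
  frequencies are kept.

  Lower bound: an operator of rank < n annihilates a nonzero combination of the unit
  vectors of a box of at least n frequencies, on which w \<le> 1 + d n^(2g). This gives
  n^g a_n \<ge> (1 + d)^(-1/2), which is stronger than the stated lower bound.
\<close>

section \<open>One-dimensional exponential sums\<close>

lemma exp_one_gt_27_10: "exp 1 > (27/10::real)"
  using e_approx_32 by (simp add: abs_if split: if_split_asm)

lemma powr_square: "(x powr a)\<^sup>2 = x powr (2 * a)" for x a :: real
  by (metis mult_2 power2_eq_square powr_add)

lemma powr_ge_bernoulli: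
  fixes t a :: real
  assumes "1 \<le> t" "1 \<le> a"
  shows "1 + a * (t - 1) \<le> t powr a"
proof -
  have t: "t > 0" using assms by simp
  have "ln t \<ge> 1 - 1 / t"
    using ln_le_minus_one[of "1/t"] t by (simp add: ln_div)
  then have "1 + (a - 1) * (1 - 1/t) \<le> 1 + (a - 1) * ln t"
    using assms by (intro add_left_mono mult_left_mono) auto
  also have "1 + (a - 1) * ln t \<le> t powr (a - 1)"
    using t by (simp add: powr_def)
  finally have "t * (1 + (a - 1) * (1 - 1/t)) \<le> t * t powr (a - 1)"
    using t by (intro mult_left_mono) auto
  moreover have "t * (1 + (a - 1) * (1 - 1/t)) = 1 + a * (t - 1)"
    using t by (simp add: field_simps)
  moreover have "t * t powr (a - 1) = t powr a"
    using t by (simp add: powr_diff)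
  ultimately show ?thesis by simp
qed

lemma exp_neg_le_powr:
  fixes t q :: real
  assumes "0 < t" "0 < q"
  shows "exp (-t) \<le> (q / exp 1) powr q * t powr (-q)"
proof -
  have "ln t - ln q \<le> t/q - 1"
    using assms ln_le_minus_one[of "t/q"] by (simp add: ln_div)
  then have "q * (ln t - ln q) \<le> q * (t/q - 1)"
    using assms by (intro mult_left_mono) auto
  then have "-t \<le> q * (ln q - 1) - q * ln t"
    using assms by (simp add: algebra_simps)
  also have "exp (q * (ln q - 1) - q * ln t) = (q / exp 1) powr q * t powr (-q)"
    using assms by (simp add: powr_def ln_div mult_exp_exp)
  finally show ?thesis by simp
qed

lemma powr_neg_le_telescope:
  fixes m a :: real
  assumes "1 < m" "0 < a"
  shows "m powr (-(1+a)) \<le> ((m-1) powr (-a) - m powr (-a)) / a"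
proof -
  define r where "r = m / (m - 1)"
  have r: "r > 0" using assms by (simp add: r_def)
  have "ln r \<ge> 1 / m"
    using ln_le_minus_one[of "1/r"] r assms by (simp add: r_def ln_div field_simps)
  then have "1 + a / m \<le> 1 + a * ln r"
    using assms by (simp add: divide_inverse mult_left_mono)
  also have "\<dots> \<le> r powr a" using r by (simp add: powr_def)
  finally have "m powr (-a) * (1 + a/m) \<le> m powr (-a) * r powr a"
    by (intro mult_left_mono) auto
  moreover have "m powr (-a) * r powr a = (m-1) powr (-a)"
    using assms by (simp add: r_def powr_divide powr_minus field_simps)
  moreover have "m powr (-(1+a)) = m powr (-a) / m"
    using assms by (simp add: powr_diff powr_minus field_simps powr_add)
  ultimately have "a * m powr (-(1+a)) \<le> (m-1) powr (-a) - m powr (-a)"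
    by (simp add: algebra_simps)
  then show ?thesis using assms by (simp add: field_simps)
qed

lemma sum_powr_neg_tail_le:
  fixes a :: real and k :: nat
  assumes "1 \<le> k" "0 < a"
  shows "(\<Sum>m\<in>{k+1..k+N}. real m powr (-(1+a))) \<le> real k powr (-a) / a"
proof -
  have "(\<Sum>m\<in>{k+1..k+N}. real m powr (-(1+a))) \<le> (real k powr (-a) - real (k+N) powr (-a)) / a"
  proof (induction N)
    case (Suc N)
    have "{k+1..k + Suc N} = insert (k + Suc N) {k+1..k+N}" by auto
    then have "(\<Sum>m\<in>{k+1..k+Suc N}. real m powr (-(1+a)))
        = real (k + Suc N) powr (-(1+a)) + (\<Sum>m\<in>{k+1..k+N}. real m powr (-(1+a)))"
      by simp
    also have "real (k + Suc N) powr (-(1+a))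
        \<le> ((real (k + Suc N) - 1) powr (-a) - real (k + Suc N) powr (-a)) / a"
      using assms by (intro powr_neg_le_telescope) auto
    finally show ?case using Suc by (simp add: diff_divide_distrib)
  qed simp
  also have "\<dots> \<le> real k powr (-a) / a" using assms by (simp add: divide_right_mono)
  finally show ?thesis .
qed

lemma sum_le_head_plus_tail:
  fixes f :: "nat \<Rightarrow> real"
  assumes "\<And>m. 0 \<le> f m" "\<And>m. f m \<le> 1"
  shows "(\<Sum>m\<in>{1..M}. f m) \<le> real k + (\<Sum>m\<in>{k+1..k+M}. f m)"
proof -
  have "(\<Sum>m\<in>{1..M}. f m) \<le> (\<Sum>m\<in>{1..k+M}. f m)"
    using assms by (intro sum_mono2) auto
  also have "\<dots> = (\<Sum>m\<in>{1..k}. f m) + (\<Sum>m\<in>{k+1..k+M}. f m)"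
    by (rule sum.ub_add_nat) simp
  also have "(\<Sum>m\<in>{1..k}. f m) \<le> (\<Sum>m\<in>{1..k}. 1)"
    using assms by (intro sum_mono)
  finally show ?thesis by simp
qed

lemma sum_exp_neg_linear_eq:
  fixes z y :: real and k :: nat
  assumes "z > 0"
  shows "(\<Sum>m\<in>{k+1..k+N}. exp (-(z * (real m - y))))
        = (exp (-(z * (real k - y))) - exp (-(z * (real (k+N) - y)))) / (exp z - 1)"
proof (induction N)
  case (Suc N)
  have "{k+1..k + Suc N} = insert (k + Suc N) {k+1..k+N}" by auto
  then have "(\<Sum>m\<in>{k+1..k+Suc N}. exp (-(z * (real m - y))))
      = exp (-(z * (real (k + Suc N) - y))) + (\<Sum>m\<in>{k+1..k+N}. exp (-(z * (real m - y))))"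
    by simp
  moreover have "exp (-(z * (real (k+N) - y))) = exp (-(z * (real (k + Suc N) - y))) * exp z"
    by (simp add: mult_exp_exp algebra_simps)
  moreover have "exp z - 1 > 0" using assms by simp
  ultimately show ?case using Suc by (simp add: field_simps)
qed simp

lemma sum_exp_neg_linear_le:
  fixes z y :: real and k :: nat
  assumes z: "0 < z" and k: "real k \<le> y" "y \<le> real k + 1"
  shows "(\<Sum>m\<in>{k+1..k+N}. exp (-(z * (real m - y)))) \<le> (y - real k) + 1 / z"
proof -
  define \<theta> where "\<theta> = y - real k"
  have \<theta>: "0 \<le> \<theta>" "\<theta> \<le> 1" using k by (auto simp: \<theta>_def)
  have ez: "exp z - 1 > 0" using z by simp
  have "exp (-(z * (real k - y))) = exp (\<theta> * z)" by (simp add: \<theta>_def algebra_simps)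
  then have "(\<Sum>m\<in>{k+1..k+N}. exp (-(z * (real m - y)))) \<le> exp (\<theta> * z) / (exp z - 1)"
    unfolding sum_exp_neg_linear_eq[OF z] using ez by (intro divide_right_mono) auto
  also have "exp (\<theta> * z) \<le> \<theta> * exp z + (1 - \<theta>)"
    using convex_onD[OF exp_convex, of "1 - \<theta>" z 0] \<theta> by simp
  also have "(\<theta> * exp z + (1 - \<theta>)) / (exp z - 1) = \<theta> + 1 / (exp z - 1)"
    using ez by (simp add: field_simps)
  also have "1 / (exp z - 1) \<le> 1 / z"
  proof -
    have "z \<le> exp z - 1" using exp_ge_add_one_self[of z] by linarith
    then show ?thesis using z by (intro divide_left_mono) auto
  qed
  finally show ?thesis using ez by (simp add: \<theta>_def divide_right_mono)
qed

lemma sum_exp_neg_powr_le_ge1: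
  fixes a y :: real
  assumes a: "1 \<le> a" and y: "0 < y"
  shows "(\<Sum>m\<in>{1..M}. exp (-((real m / y) powr a))) \<le> (1 + 1/(2*a)) * y"
proof -
  define k where "k = nat \<lfloor>y\<rfloor>"
  have k: "real k \<le> y" "y \<le> real k + 1" using y unfolding k_def by linarith+
  define z where "z = a / y"
  have z: "z > 0" using a y by (simp add: z_def)
  have tail: "exp (-((real m / y) powr a)) \<le> exp (-1) * exp (-(z * (real m - y)))"
    if "m \<in> {k+1..k+M}" for m
  proof -
    have "real m / y \<ge> 1" using that k y by (simp add: field_simps)
    then have "1 + a * (real m / y - 1) \<le> (real m / y) powr a"
      using powr_ge_bernoulli a by blast
    moreover have "a * (real m / y - 1) = z * (real m - y)"
      using y by (simp add: z_def field_simps)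
    ultimately show ?thesis by (simp add: mult_exp_exp)
  qed
  have e: "exp (-1) \<le> (1/2::real)"
    using exp_one_gt_27_10 by (simp add: exp_minus field_simps)
  have "(\<Sum>m\<in>{1..M}. exp (-((real m / y) powr a)))
      \<le> real k + (\<Sum>m\<in>{k+1..k+M}. exp (-((real m / y) powr a)))"
    by (rule sum_le_head_plus_tail) auto
  also have "\<dots> \<le> real k + exp (-1) * (\<Sum>m\<in>{k+1..k+M}. exp (-(z * (real m - y))))"
    unfolding sum_distrib_left by (intro add_left_mono sum_mono tail)
  also have "\<dots> \<le> real k + 1/2 * ((y - real k) + 1 / z)"
    using sum_exp_neg_linear_le[OF z k] e k z
    by (intro add_left_mono mult_mono) (auto intro: sum_nonneg)
  also have "\<dots> \<le> (1 + 1/(2*a)) * y"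
    using k a y by (simp add: z_def field_simps)
  finally show ?thesis .
qed

lemma powr_mult_sum_powr_neg_tail_le:
  fixes a y :: real
  assumes a: "0 < a" "a < 1" and y: "0 < y" and k: "k = nat \<lfloor>y\<rfloor>"
  shows "y powr (1+a) * (\<Sum>m\<in>{k+1..k+M}. real m powr (-(1+a))) \<le> 2 * y / a"
proof (cases "k = 0")
  case True
  then have y1: "y < 1" using k y by linarith
  have le1: "real m powr (-(1+a)) \<le> 1" for m
  proof (cases "m = 0")
    case False
    then have "real m powr (-(1+a)) \<le> real m powr 0" using a by (intro powr_mono) auto
    then show ?thesis using False by simp
  qed simp
  have "(\<Sum>m\<in>{1..M}. real m powr (-(1+a))) \<le> real 1 + (\<Sum>m\<in>{1+1..1+M}. real m powr (-(1+a)))"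
    by (rule sum_le_head_plus_tail[OF _ le1]) simp
  moreover have "(\<Sum>m\<in>{1+1..1+M}. real m powr (-(1+a))) \<le> 1 / a"
    using sum_powr_neg_tail_le[of 1 a M] a by simp
  ultimately have s: "(\<Sum>m\<in>{1..M}. real m powr (-(1+a))) \<le> 1 + 1/a" by simp
  have "y powr (1+a) \<le> y powr 1" using y y1 a by (intro powr_mono') auto
  then have "y powr (1+a) * (\<Sum>m\<in>{1..M}. real m powr (-(1+a))) \<le> y * (1 + 1/a)"
    using s y by (intro mult_mono) (auto intro: sum_nonneg)
  also have "\<dots> \<le> 2 * y / a" using a y by (simp add: field_simps)
  finally show ?thesis using True by simp
next
  case False
  then have k1: "1 \<le> k" and kp: "real k > 0" by simp_all
  have ky: "real k \<le> y" "y \<le> 2 * real k" using k k1 y by linarith+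
  have "y powr (1+a) * (\<Sum>m\<in>{k+1..k+M}. real m powr (-(1+a))) \<le> y powr (1+a) * (real k powr (-a) / a)"
    using sum_powr_neg_tail_le[OF k1 a(1)] by (intro mult_left_mono) auto
  also have "\<dots> = y / a * (y / real k) powr a"
    using y kp by (simp add: powr_add powr_divide powr_minus field_simps)
  also have "(y / real k) powr a \<le> (y / real k) powr 1"
    using a y kp ky by (intro powr_mono) (auto simp: field_simps)
  also have "(y / real k) powr 1 \<le> 2"
    using y kp ky by (simp add: field_simps)
  finally show ?thesis using a y by (simp add: mult_left_mono field_simps)
qed

lemma sum_exp_neg_powr_le_lt1:
  fixes a y :: real
  assumes a: "0 < a" "a < 1" and y: "0 < y"
  shows "(\<Sum>m\<in>{1..M}. exp (-((real m / y) powr a)))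
     \<le> (1 + 2 / a * ((1/a + 1) / exp 1) powr (1/a + 1)) * y"
proof -
  define q where "q = 1/a + 1"
  define C where "C = (q / exp 1) powr q"
  have q: "q > 0" using a by (simp add: q_def add_pos_pos)
  define k where "k = nat \<lfloor>y\<rfloor>"
  have k: "real k \<le> y" using y unfolding k_def by linarith
  have tail: "exp (-((real m / y) powr a)) \<le> C * y powr (1+a) * real m powr (-(1+a))"
    if "m \<ge> 1" for m
  proof -
    have m: "real m > 0" using that by simp
    have "exp (-((real m / y) powr a)) \<le> C * ((real m / y) powr a) powr (-q)"
      unfolding C_def using exp_neg_le_powr m y q by simp
    also have "((real m / y) powr a) powr (-q) = (real m / y) powr (-(1+a))"
    proof -
      have "a * -q = -(1+a)" using a by (simp add: q_def field_simps)
      then show ?thesis by (simp add: powr_powr)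
    qed
    also have "\<dots> = real m powr (-(1+a)) / y powr (-(1+a))"
      using m y by (intro powr_divide)
    also have "\<dots> = y powr (1+a) * real m powr (-(1+a))"
      by (simp only: powr_minus_divide[of y]) simp
    finally show ?thesis by (simp add: mult.assoc)
  qed
  have "(\<Sum>m\<in>{1..M}. exp (-((real m / y) powr a)))
      \<le> real k + (\<Sum>m\<in>{k+1..k+M}. exp (-((real m / y) powr a)))"
    by (rule sum_le_head_plus_tail) auto
  also have "\<dots> \<le> y + (\<Sum>m\<in>{k+1..k+M}. C * y powr (1+a) * real m powr (-(1+a)))"
    using k tail by (intro add_mono sum_mono) auto
  also have "\<dots> = y + C * (y powr (1+a) * (\<Sum>m\<in>{k+1..k+M}. real m powr (-(1+a))))"
    by (simp add: sum_distrib_left mult.assoc)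
  also have "\<dots> \<le> y + C * (2 * y / a)"
    using powr_mult_sum_powr_neg_tail_le[OF a y k_def]
    by (intro add_left_mono mult_left_mono) (auto simp: C_def)
  finally show ?thesis by (simp add: C_def q_def algebra_simps)
qed

text \<open>The constant c(a) of \<Sum>_(m \<ge> 1) exp (-(m/y)^a) \<le> c(a) y: for a \<ge> 1 the summands
  are linearised by Bernoulli's inequality, for a < 1 they are bounded by the moment
  estimate exp (-t) \<le> (q/e)^q t^(-q) with q = 1/a + 1.\<close>

definition exp_sum_const :: "real \<Rightarrow> real" where
  "exp_sum_const a =
     (if 1 \<le> a then 1 + 1 / (2 * a) else 1 + 2 / a * ((1/a + 1) / exp 1) powr (1/a + 1))"

lemma exp_sum_const_ge_one: "0 < a \<Longrightarrow> 1 \<le> exp_sum_const a"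
  by (simp add: exp_sum_const_def)

lemma sum_exp_neg_powr_le:
  fixes a y :: real
  assumes "0 < a" "0 < y"
  shows "(\<Sum>m\<in>{1..M}. exp (-((real m / y) powr a))) \<le> exp_sum_const a * y"
  using sum_exp_neg_powr_le_ge1[of a y M] sum_exp_neg_powr_le_lt1[of a y M] assms
  by (auto simp: exp_sum_const_def)

lemma sum_int_symmetric:
  fixes f :: "int \<Rightarrow> real"
  assumes "\<And>m. f (-m) = f m"
  shows "(\<Sum>m\<in>{- int M..int M}. f m) = f 0 + 2 * (\<Sum>m\<in>{1..M}. f (int m))"
proof (induction M)
  case (Suc M)
  have "{- int (Suc M)..int (Suc M)} = insert (int (Suc M)) (insert (- int (Suc M)) {- int M..int M})"
    by auto
  then have "(\<Sum>m\<in>{- int (Suc M)..int (Suc M)}. f m)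
      = f (int (Suc M)) + f (- int (Suc M)) + (\<Sum>m\<in>{- int M..int M}. f m)"
    by (simp add: add.assoc)
  then show ?case using Suc assms[of "int (Suc M)"] by simp
qed simp

lemma sum_exp_neg_abs_powr_le:
  fixes a lam :: real
  assumes a: "0 < a" and lam: "0 < lam"
  shows "(\<Sum>m\<in>{- int M..int M}. exp (-(lam * \<bar>real_of_int m\<bar> powr a)))
           \<le> 1 + 2 * exp_sum_const a * lam powr (-(1/a))"
proof -
  define y where "y = lam powr (-(1/a))"
  have y: "y > 0" using lam by (simp add: y_def)
  have "y powr a = lam powr (-1)" using a by (simp add: y_def powr_powr)
  then have "y powr a = 1 / lam" using lam by (simp add: powr_minus_divide)
  then have scale: "lam * real m powr a = (real m / y) powr a" for m :: nat
    using y lam by (simp add: powr_divide)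
  have "(\<Sum>m\<in>{- int M..int M}. exp (-(lam * \<bar>real_of_int m\<bar> powr a)))
      = 1 + 2 * (\<Sum>m\<in>{1..M}. exp (-((real m / y) powr a)))"
    using a by (subst sum_int_symmetric) (simp_all add: scale)
  also have "\<dots> \<le> 1 + 2 * (exp_sum_const a * y)"
    using sum_exp_neg_powr_le[OF a y] by simp
  finally show ?thesis by (simp add: y_def)
qed

lemma exp_ge_square:
  fixes z :: real
  assumes "0 \<le> z"
  shows "(27/20 * z)\<^sup>2 \<le> exp z"
proof -
  have "exp 1 * (z/2) \<le> exp (z/2 - 1) * exp 1"
    using exp_ge_add_one_self[of "z/2 - 1"] by (simp add: mult.commute)
  then have "27/10 * (z/2) \<le> exp (z/2)"
    using exp_one_gt_27_10 assms mult_right_mono[of "27/10" "exp 1" "z/2"]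
    by (simp add: mult_exp_exp)
  then have "(27/20 * z)\<^sup>2 \<le> (exp (z/2))\<^sup>2" using assms by (intro power_mono) auto
  also have "(exp (z/2))\<^sup>2 = exp z" by (simp add: power2_eq_square flip: exp_add)
  finally show ?thesis .
qed

lemma moment_const_le:
  fixes x :: real
  assumes x: "1 \<le> x"
  shows "2 * (1 + 2 * x * ((x + 1) / exp 1) powr (x + 1)) \<le> 7/8 * (2 powr (x + 1) * (2 + x) powr x)"
proof -
  define P where "P = (2 + x) powr x"
  have P3: "P \<ge> 3"
    using powr_mono[of 1 x "2 + x"] x by (simp add: P_def)
  have frac: "4 * x * (x + 1) / exp (x + 1) \<le> 28/10"
  proof -
    have "4 * x * (x + 1) \<le> 4 * ((x + 1) * (x + 1))"
      using x by (simp add: mult_right_mono)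
    also have "\<dots> \<le> 28/10 * (27/20 * (x + 1))\<^sup>2"
    proof -
      have "28/10 * (27/20 * (x + 1))\<^sup>2 = 5103/1000 * ((x + 1) * (x + 1))"
        by (simp add: power2_eq_square algebra_simps)
      moreover have "0 \<le> (x + 1) * (x + 1)" by simp
      ultimately show ?thesis by linarith
    qed
    also have "\<dots> \<le> 28/10 * exp (x + 1)" using exp_ge_square[of "x + 1"] x by simp
    finally show ?thesis by (simp add: divide_le_eq)
  qed
  have "((x + 1) / exp 1) powr (x + 1) = (x + 1) * (x + 1) powr x / exp (x + 1)"
    using x by (simp add: powr_divide powr_add powr_def[of "exp 1"] exp_add mult.commute)
  also have "\<dots> \<le> (x + 1) * P / exp (x + 1)"
    unfolding P_def using x by (intro divide_right_mono mult_left_mono powr_mono2) auto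
  finally have "4 * x * ((x + 1) / exp 1) powr (x + 1) \<le> 4 * x * ((x + 1) * P / exp (x + 1))"
    using x by (intro mult_left_mono) auto
  also have "\<dots> = 4 * x * (x + 1) / exp (x + 1) * P" by simp
  also have "\<dots> \<le> 28/10 * P" using frac P3 by (intro mult_right_mono) auto
  finally have "2 * (1 + 2 * x * ((x + 1) / exp 1) powr (x + 1)) \<le> 2 + 28/10 * P" by simp
  also have "\<dots> \<le> 7/8 * (4 * P)" using P3 by simp
  also have "\<dots> \<le> 7/8 * (2 powr (x + 1) * P)"
    using powr_mono[of 2 "x + 1" 2] x P3 by (intro mult_left_mono mult_right_mono) auto
  finally show ?thesis by (simp add: P_def)
qed

section \<open>The constants of the upper bound\<close>

lemma two_exp_sum_const_le:
  fixes p u v x :: real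
  assumes v: "0 < v" and vu: "v \<le> u" and pu: "u \<le> p" and p: "1/2 \<le> p"
    and x1: "1 / (2 * u) \<le> x" and x2: "x \<le> 1 / (2 * v)"
  shows "2 * exp_sum_const (1/x)
           \<le> 7/8 * (2 powr (2 * (p + u)) * (2 + 1 / (2 * v)) powr (u / v)) powr x"
proof -
  define X where "X = 1 / (2 * v)"
  have u: "u > 0" and X: "X > 0" using v vu by (simp_all add: X_def)
  have x: "x > 0" using x1 u by (smt (verit) divide_pos_pos)
  have ux: "1/2 \<le> u * x" using x1 u by (simp add: field_simps)
  have px: "1/2 * x \<le> p * x" "u * x \<le> p * x" using p pu x by (simp_all add: mult_right_mono)
  have K: "(2 powr (2 * (p + u)) * (2 + X) powr (u / v)) powr x
      = 2 powr (2 * (p + u) * x) * (2 + X) powr (u / v * x)"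
    using X by (simp add: powr_mult powr_powr)
  have B: "(2 + X) powr (u / v * x) \<ge> 1" using X v u x by (intro ge_one_powr_ge_zero) auto
  show ?thesis
  proof (cases "x \<le> 1")
    case True
    then have c: "exp_sum_const (1/x) = 1 + x / 2" using x by (simp add: exp_sum_const_def)
    have "(2::real) powr 2 \<le> 2 powr (2 * (p + u) * x)"
      using ux px by (intro powr_mono) (auto simp: algebra_simps)
    then have "4 * 1 \<le> 2 powr (2 * (p + u) * x) * (2 + X) powr (u / v * x)"
      using B by (intro mult_mono) auto
    then show ?thesis using c True unfolding X_def[symmetric] K by simp
  next
    case False
    then have c: "exp_sum_const (1/x) = 1 + 2 * x * ((x + 1) / exp 1) powr (x + 1)"
      by (simp add: exp_sum_const_def)
    have "(2::real) powr (x + 1) \<le> 2 powr (2 * (p + u) * x)"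
      using ux px by (intro powr_mono) (auto simp: algebra_simps)
    moreover have "(2 + x) powr x \<le> (2 + X) powr (u / v * x)"
    proof -
      have "(2 + x) powr x \<le> (2 + X) powr x" using x x2 by (intro powr_mono2) (auto simp: X_def)
      also have "\<dots> \<le> (2 + X) powr (u / v * x)"
        using X x v vu by (intro powr_mono) (auto simp: field_simps)
      finally show ?thesis .
    qed
    ultimately have "2 powr (x + 1) * (2 + x) powr x \<le> 2 powr (2 * (p + u) * x) * (2 + X) powr (u / v * x)"
      by (intro mult_mono) auto
    then show ?thesis
      using moment_const_le[of x] False c unfolding X_def[symmetric] K by simp
  qed
qed

lemma threshold_powr_gt:
  fixes u v p g :: real and d n :: nat
  assumes v: "0 < v" and vu: "v \<le> u" and pu: "u \<le> p" and p: "1/2 \<le> p"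
    and g: "0 < g" "v \<le> g * real d"
    and n: "real n > (4 powr (p / v) * 2 powr (u / v) * (1 + 1 / (2 * v)) powr (u / (2 * v^2))
                        * (2 * exp 1 * p) powr (1 / (2 * v))) ^ d"
  shows "real n powr (2 * g) > exp 1 * 2 powr (4 * p + 2 * u)"
proof -
  define A1 where "A1 = (4::real) powr (p / v)"
  define A2 where "A2 = (2::real) powr (u / v)"
  define A3 where "A3 = (1 + 1 / (2 * v)) powr (u / (2 * v^2))"
  define A4 where "A4 = (2 * exp 1 * p) powr (1 / (2 * v))"
  define E where "E = A1 * A2 * A3 * A4"
  have u: "0 < u" using v vu by linarith
  have ep: "exp 1 \<le> 2 * exp 1 * p" using p by simp
  have "1 \<le> 2 * exp 1 * p" using ep exp_one_gt_27_10 by linarith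
  then have A: "1 \<le> A1" "1 \<le> A2" "1 \<le> A3" "1 \<le> A4"
    using v u pu unfolding A1_def A2_def A3_def A4_def
    by (auto intro!: ge_one_powr_ge_zero)
  then have E: "1 \<le> E" unfolding E_def
    by (metis mult_mono' mult.right_neutral zero_le_one order_trans)
  have "A1 powr (2 * v) = 2 powr (4 * p)"
  proof -
    have "A1 powr (2 * v) = (2 powr 2) powr (2 * p)" unfolding A1_def using v by (simp add: powr_powr mult.commute)
    also have "\<dots> = 2 powr (4 * p)" by (simp only: powr_powr) simp
    finally show ?thesis .
  qed
  moreover have "A2 powr (2 * v) = 2 powr (2 * u)"
    unfolding A2_def using v by (simp add: powr_powr mult.commute)
  moreover have "A4 powr (2 * v) = 2 * exp 1 * p"
    unfolding A4_def using v p by (simp add: powr_powr)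
  ultimately have "E powr (2 * v) = 2 powr (4 * p + 2 * u) * (A3 powr (2 * v) * (2 * exp 1 * p))"
    using A unfolding E_def by (simp add: powr_mult powr_add)
  moreover have "1 * exp 1 \<le> A3 powr (2 * v) * (2 * exp 1 * p)"
    using A v ep by (intro mult_mono ge_one_powr_ge_zero) auto
  ultimately have "exp 1 * 2 powr (4 * p + 2 * u) \<le> E powr (2 * v)"
    by (simp add: mult.commute)
  also have "\<dots> \<le> E powr (2 * g * real d)" using E g by (intro powr_mono) auto
  also have "\<dots> = (E ^ d) powr (2 * g)"
    using E by (simp add: powr_realpow[symmetric] powr_powr mult.commute)
  also have "\<dots> < real n powr (2 * g)"
    using n E g by (intro powr_less_mono2) (auto simp: E_def A1_def A2_def A3_def A4_def)
  finally show ?thesis .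
qed

section \<open>Sobolev sequences and approximation numbers\<close>

lemma homogeneous_system_nontrivial_solution:
  fixes \<alpha> :: "'i \<Rightarrow> 'b \<Rightarrow> 'a::field"
  assumes "finite B" "finite I" "card B < card I"
  shows "\<exists>\<gamma>. (\<exists>i\<in>I. \<gamma> i \<noteq> 0) \<and> (\<forall>b\<in>B. (\<Sum>i\<in>I. \<gamma> i * \<alpha> i b) = 0)"
  using assms
proof (induction B arbitrary: I \<alpha> rule: finite_induct)
  case empty
  then have "I \<noteq> {}" by auto
  then show ?case by (intro exI[of _ "\<lambda>_. 1"]) auto
next
  case (insert b0 B)
  show ?case
  proof (cases "\<forall>i\<in>I. \<alpha> i b0 = 0")
    case True
    have "card B < card I" using insert by simp
    then obtain \<gamma> where "\<exists>i\<in>I. \<gamma> i \<noteq> 0" "\<forall>b\<in>B. (\<Sum>i\<in>I. \<gamma> i * \<alpha> i b) = 0"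
      using insert.IH[OF insert.prems(1)] by blast
    then show ?thesis using True by (intro exI[of _ \<gamma>]) auto
  next
    case False
    then obtain i0 where i0: "i0 \<in> I" "\<alpha> i0 b0 \<noteq> 0" by auto
    define I' where "I' = I - {i0}"
    have I': "finite I'" "card B < card I'" using insert i0 by (simp_all add: I'_def)
    \<comment> \<open>eliminate the unknown \<open>i0\<close> by means of the equation \<open>b0\<close>\<close>
    define \<alpha>' where "\<alpha>' i b = \<alpha> i b - (\<alpha> i b0 / \<alpha> i0 b0) * \<alpha> i0 b" for i b
    obtain \<gamma>' where \<gamma>': "\<exists>i\<in>I'. \<gamma>' i \<noteq> 0" "\<forall>b\<in>B. (\<Sum>i\<in>I'. \<gamma>' i * \<alpha>' i b) = 0"
      using insert.IH[OF I', of \<alpha>'] by blast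
    define s where "s = (\<Sum>i\<in>I'. \<gamma>' i * \<alpha> i b0)"
    define \<gamma> where "\<gamma> i = (if i = i0 then - s / \<alpha> i0 b0 else \<gamma>' i)" for i
    have sum_I: "(\<Sum>i\<in>I. \<gamma> i * \<alpha> i b) = - s * (\<alpha> i0 b / \<alpha> i0 b0) + (\<Sum>i\<in>I'. \<gamma>' i * \<alpha> i b)" for b
    proof -
      have "(\<Sum>i\<in>I. \<gamma> i * \<alpha> i b) = \<gamma> i0 * \<alpha> i0 b + (\<Sum>i\<in>I'. \<gamma> i * \<alpha> i b)"
        using i0 insert.prems(1) unfolding I'_def by (simp add: sum.remove)
      moreover have "(\<Sum>i\<in>I'. \<gamma> i * \<alpha> i b) = (\<Sum>i\<in>I'. \<gamma>' i * \<alpha> i b)"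
        by (intro sum.cong) (auto simp: \<gamma>_def I'_def)
      ultimately show ?thesis by (simp add: \<gamma>_def)
    qed
    have "(\<Sum>i\<in>I. \<gamma> i * \<alpha> i b) = 0" if b: "b \<in> insert b0 B" for b
    proof (cases "b = b0")
      case True
      then show ?thesis using sum_I[of b0] i0 by (simp add: s_def)
    next
      case False
      have "(\<Sum>i\<in>I'. \<gamma>' i * \<alpha> i b)
          = (\<Sum>i\<in>I'. \<gamma>' i * \<alpha>' i b + (\<gamma>' i * \<alpha> i b0) * (\<alpha> i0 b / \<alpha> i0 b0))"
        by (intro sum.cong) (auto simp: \<alpha>'_def algebra_simps)
      also have "\<dots> = (\<Sum>i\<in>I'. \<gamma>' i * \<alpha>' i b) + s * (\<alpha> i0 b / \<alpha> i0 b0)"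
        by (simp only: sum.distrib s_def sum_distrib_right)
      also have "\<dots> = s * (\<alpha> i0 b / \<alpha> i0 b0)" using \<gamma>' False b by simp
      finally show ?thesis using sum_I[of b] by simp
    qed
    moreover have "\<exists>i\<in>I. \<gamma> i \<noteq> 0"
      using \<gamma>'(1) by (auto simp: \<gamma>_def I'_def)
    ultimately show ?thesis by blast
  qed
qed

lemma infsum_eq_sum_finite_support:
  fixes h :: "'a \<Rightarrow> real"
  assumes "finite F" "F \<subseteq> A" "\<And>x. x \<in> A - F \<Longrightarrow> h x = 0"
  shows "infsum h A = sum h F" "h summable_on A"
proof -
  have "infsum h F = infsum h A"
    using assms by (intro infsum_cong_neutral) auto
  then show "infsum h A = sum h F" using assms by simp
  have "h summable_on F \<longleftrightarrow> h summable_on A"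
    using assms by (intro summable_on_cong_neutral) auto
  then show "h summable_on A" using assms by simp
qed

lemma sob_weight_ge_one: "1 \<le> sob_weight R d k"
  unfolding sob_weight_def by (simp add: sum_nonneg)

lemma sob_weight_nonneg: "0 \<le> sob_weight R d k"
  using sob_weight_ge_one[of R d k] by linarith

lemma Wnorm_square: "(Wnorm R d c)\<^sup>2 = (\<Sum>\<^sub>\<infinity>k\<in>Zd d. sob_weight R d k * (cmod (c k))\<^sup>2)"
  unfolding Wnorm_def
  by (simp add: infsum_nonneg sob_weight_nonneg)

lemma L2norm_square: "(L2norm d c)\<^sup>2 = (\<Sum>\<^sub>\<infinity>k\<in>Zd d. (cmod (c k))\<^sup>2)"
  unfolding L2norm_def by (simp add: infsum_nonneg)

lemma L2norm_nonneg: "0 \<le> L2norm d c"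
  unfolding L2norm_def by (simp add: infsum_nonneg)

lemma Wnorm_nonneg: "0 \<le> Wnorm R d c"
  unfolding Wnorm_def by (simp add: infsum_nonneg sob_weight_nonneg)

lemma L2norm_scale: "L2norm d (\<lambda>k. a * c k) = cmod a * L2norm d c"
  unfolding L2norm_def by (simp add: norm_mult power_mult_distrib infsum_cmult_right' real_sqrt_mult)

lemma Wnorm_scale: "Wnorm R d (\<lambda>k. a * c k) = cmod a * Wnorm R d c"
proof -
  have "(\<Sum>\<^sub>\<infinity>k\<in>Zd d. sob_weight R d k * (cmod (a * c k))\<^sup>2)
      = (cmod a)\<^sup>2 * (\<Sum>\<^sub>\<infinity>k\<in>Zd d. sob_weight R d k * (cmod (c k))\<^sup>2)"
    by (simp add: norm_mult power_mult_distrib infsum_cmult_right'[symmetric] algebra_simps)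
  then show ?thesis unfolding Wnorm_def by (simp add: real_sqrt_mult)
qed

lemma Wseq_square_summable:
  assumes "c \<in> Wseq R d"
  shows "(\<lambda>k. (cmod (c k))\<^sup>2) summable_on Zd d"
proof (rule summable_on_comparison_test)
  show "(\<lambda>k. sob_weight R d k * (cmod (c k))\<^sup>2) summable_on Zd d"
    using assms by (simp add: Wseq_def)
  show "(cmod (c k))\<^sup>2 \<le> sob_weight R d k * (cmod (c k))\<^sup>2" for k
    using sob_weight_ge_one[of R d k] by (simp add: mult_le_cancel_right1)
qed simp

lemma L2norm_le_Wnorm:
  assumes "c \<in> Wseq R d"
  shows "L2norm d c \<le> Wnorm R d c"
proof -
  have "(\<Sum>\<^sub>\<infinity>k\<in>Zd d. (cmod (c k))\<^sup>2) \<le> (\<Sum>\<^sub>\<infinity>k\<in>Zd d. sob_weight R d k * (cmod (c k))\<^sup>2)"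
    using assms Wseq_square_summable[OF assms] sob_weight_ge_one[of R d]
    by (intro infsum_mono) (auto simp: Wseq_def mult_le_cancel_right1)
  then show ?thesis unfolding L2norm_def Wnorm_def by simp
qed

lemma Wseq_zero: "(\<lambda>k. 0) \<in> Wseq R d"
  by (simp add: Wseq_def)

lemma norm_add_square_le:
  fixes x y :: "'a::real_normed_vector"
  shows "(norm (x + y))\<^sup>2 \<le> 2 * (norm x)\<^sup>2 + 2 * (norm y)\<^sup>2"
proof -
  have "(norm (x + y))\<^sup>2 \<le> (norm x + norm y)\<^sup>2"
    by (intro power_mono norm_triangle_ineq) auto
  also have "\<dots> \<le> 2 * (norm x)\<^sup>2 + 2 * (norm y)\<^sup>2"
    using sum_squares_ge_zero[of "norm x - norm y" 0] by (simp add: power2_eq_square algebra_simps)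
  finally show ?thesis .
qed

lemma Wseq_lincomb:
  assumes "x \<in> Wseq R d" "y \<in> Wseq R d"
  shows "(\<lambda>k. a * x k + b * y k) \<in> Wseq R d"
proof -
  let ?w = "sob_weight R d"
  have "(\<lambda>k. 2 * (cmod a)\<^sup>2 * (?w k * (cmod (x k))\<^sup>2) + 2 * (cmod b)\<^sup>2 * (?w k * (cmod (y k))\<^sup>2))
          summable_on Zd d"
    using assms by (intro summable_on_add summable_on_cmult_right) (auto simp: Wseq_def)
  moreover have "?w k * (cmod (a * x k + b * y k))\<^sup>2
      \<le> 2 * (cmod a)\<^sup>2 * (?w k * (cmod (x k))\<^sup>2) + 2 * (cmod b)\<^sup>2 * (?w k * (cmod (y k))\<^sup>2)" for k
    using mult_left_mono[OF norm_add_square_le[of "a * x k" "b * y k"], of "?w k"]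
      sob_weight_ge_one[of R d k]
    by (simp add: norm_mult power_mult_distrib algebra_simps)
  ultimately have "(\<lambda>k. ?w k * (cmod (a * x k + b * y k))\<^sup>2) summable_on Zd d"
    by (rule summable_on_comparison_test)
       (simp add: sob_weight_nonneg)
  then show ?thesis using assms by (auto simp: Wseq_def)
qed

lemma Wseq_sum:
  assumes "finite I" "\<And>i. i \<in> I \<Longrightarrow> v i \<in> Wseq R d"
  shows "(\<lambda>j. \<Sum>i\<in>I. \<gamma> i * v i j) \<in> Wseq R d"
  using assms
proof (induction I rule: finite_induct)
  case (insert i0 I)
  then have "(\<lambda>k. \<gamma> i0 * v i0 k + 1 * (\<Sum>i\<in>I. \<gamma> i * v i k)) \<in> Wseq R d"
    by (intro Wseq_lincomb) auto
  then show ?case using insert by simp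
qed (simp add: Wseq_zero)

lemma bounded_linear_WL2_lincomb:
  assumes "bounded_linear_WL2 R d A" "x \<in> Wseq R d" "y \<in> Wseq R d"
  shows "A (\<lambda>k. a * x k + b * y k) = (\<lambda>k. a * A x k + b * A y k)"
  using assms by (simp add: bounded_linear_WL2_def)

lemma bounded_linear_WL2_sum:
  assumes A: "bounded_linear_WL2 R d A" and "finite I" "\<And>i. i \<in> I \<Longrightarrow> v i \<in> Wseq R d"
  shows "A (\<lambda>j. \<Sum>i\<in>I. \<gamma> i * v i j) = (\<lambda>j. \<Sum>i\<in>I. \<gamma> i * A (v i) j)"
  using assms(2,3)
proof (induction I rule: finite_induct)
  case empty
  then show ?case using bounded_linear_WL2_lincomb[OF A Wseq_zero Wseq_zero, of 0 0] by simp
next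
  case (insert i0 I)
  have sum: "(\<lambda>j. \<Sum>i\<in>I. \<gamma> i * v i j) \<in> Wseq R d" using insert by (intro Wseq_sum) auto
  show ?case
    using bounded_linear_WL2_lincomb[OF A _ sum, of "v i0" "\<gamma> i0" 1] insert by simp
qed

lemma bounded_linear_WL2_scale:
  assumes "bounded_linear_WL2 R d A" "c \<in> Wseq R d"
  shows "A (\<lambda>k. a * c k) = (\<lambda>k. a * A c k)"
  using bounded_linear_WL2_sum[OF assms(1), of "{()}" "\<lambda>_. c" "\<lambda>_. a"] assms(2) by simp

lemma summable_on_sum:
  fixes f :: "'b \<Rightarrow> 'a \<Rightarrow> real"
  assumes "finite B" "\<And>b. b \<in> B \<Longrightarrow> f b summable_on A"
  shows "(\<lambda>x. \<Sum>b\<in>B. f b x) summable_on A"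
  using assms by (induction B rule: finite_induct) (auto intro: summable_on_add)

lemma square_summable_lincomb:
  assumes "finite B" "B \<subseteq> L2seq d"
  shows "(\<lambda>k. (cmod (\<Sum>b\<in>B. \<alpha> b * b k))\<^sup>2) summable_on Zd d"
proof (rule summable_on_comparison_test)
  show "(\<lambda>k. real (card B) * (\<Sum>b\<in>B. (cmod (\<alpha> b))\<^sup>2 * (cmod (b k))\<^sup>2)) summable_on Zd d"
    using assms by (intro summable_on_cmult_right summable_on_sum) (auto simp: L2seq_def)
  fix k
  have "cmod (\<Sum>b\<in>B. \<alpha> b * b k) \<le> (\<Sum>b\<in>B. cmod (\<alpha> b) * cmod (b k))"
    by (rule order_trans[OF norm_sum]) (simp add: norm_mult)
  then have "(cmod (\<Sum>b\<in>B. \<alpha> b * b k))\<^sup>2 \<le> (\<Sum>b\<in>B. cmod (\<alpha> b) * cmod (b k))\<^sup>2"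
    by (intro power_mono) auto
  also have "\<dots> \<le> (\<Sum>b\<in>B. (cmod (\<alpha> b) * cmod (b k))\<^sup>2) * real (card B)"
    by (rule sum_squared_le_sum_of_squares)
  finally show "(cmod (\<Sum>b\<in>B. \<alpha> b * b k))\<^sup>2
      \<le> real (card B) * (\<Sum>b\<in>B. (cmod (\<alpha> b))\<^sup>2 * (cmod (b k))\<^sup>2)"
    by (simp add: power_mult_distrib mult.commute)
qed simp

lemma L2norm_diff_square_le:
  assumes "(\<lambda>k. (cmod (x k))\<^sup>2) summable_on Zd d" "(\<lambda>k. (cmod (y k))\<^sup>2) summable_on Zd d"
  shows "(L2norm d (\<lambda>k. x k - y k))\<^sup>2 \<le> 2 * (L2norm d x)\<^sup>2 + 2 * (L2norm d y)\<^sup>2"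
proof -
  have sum2: "(\<lambda>k. 2 * (cmod (x k))\<^sup>2 + 2 * (cmod (y k))\<^sup>2) summable_on Zd d"
    using assms by (intro summable_on_add summable_on_cmult_right)
  have le: "(cmod (x k - y k))\<^sup>2 \<le> 2 * (cmod (x k))\<^sup>2 + 2 * (cmod (y k))\<^sup>2" for k
    using norm_add_square_le[of "x k" "- y k"] by simp
  have "(\<Sum>\<^sub>\<infinity>k\<in>Zd d. (cmod (x k - y k))\<^sup>2) \<le> (\<Sum>\<^sub>\<infinity>k\<in>Zd d. 2 * (cmod (x k))\<^sup>2 + 2 * (cmod (y k))\<^sup>2)"
    using le by (intro infsum_mono sum2 summable_on_comparison_test[OF sum2]) auto
  then show ?thesis
    using assms by (simp add: L2norm_square infsum_add summable_on_cmult_right infsum_cmult_right)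
qed

lemma bdd_above_op_norm_WL2:
  assumes A: "bounded_linear_WL2 R d A" and rk: "rank_lt_WL2 R d n A"
  shows "bdd_above {L2norm d (\<lambda>k. c k - A c k) | c. c \<in> Wseq R d \<and> Wnorm R d c \<le> 1}"
proof -
  obtain C where C: "\<forall>c\<in>Wseq R d. L2norm d (A c) \<le> C * Wnorm R d c"
    using A unfolding bounded_linear_WL2_def by blast
  obtain B where B: "finite B" "B \<subseteq> L2seq d" "\<forall>c\<in>Wseq R d. \<exists>\<alpha>. A c = (\<lambda>k. \<Sum>b\<in>B. \<alpha> b * b k)"
    using rk unfolding rank_lt_WL2_def by blast
  have "L2norm d (\<lambda>k. c k - A c k) \<le> sqrt (2 + 2 * C\<^sup>2)"
    if c: "c \<in> Wseq R d" "Wnorm R d c \<le> 1" for c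
  proof -
    \<comment> \<open>\<open>L2norm\<close> is an \<open>infsum\<close>, hence 0 on non-summable families: the bound by \<open>C\<close>
      says nothing until finite rank has put \<open>A c\<close> into L_2.\<close>
    have Ac: "(\<lambda>k. (cmod (A c k))\<^sup>2) summable_on Zd d"
    proof -
      obtain \<alpha> where "A c = (\<lambda>k. \<Sum>b\<in>B. \<alpha> b * b k)" using B c by blast
      then show ?thesis using square_summable_lincomb[OF B(1,2)] by simp
    qed
    have "L2norm d c \<le> 1" using L2norm_le_Wnorm[OF c(1)] c(2) by linarith
    then have "(L2norm d c)\<^sup>2 \<le> 1" by (simp add: L2norm_nonneg power_le_one)
    moreover have "(L2norm d (A c))\<^sup>2 \<le> C\<^sup>2"
    proof -
      have "(L2norm d (A c))\<^sup>2 \<le> (C * Wnorm R d c)\<^sup>2"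
        using C c L2norm_nonneg by (intro power_mono) auto
      also have "\<dots> = C\<^sup>2 * (Wnorm R d c)\<^sup>2" by (simp add: power_mult_distrib)
      also have "\<dots> \<le> C\<^sup>2 * 1"
        using c Wnorm_nonneg by (intro mult_left_mono power_le_one) auto
      finally show ?thesis by simp
    qed
    ultimately have "(L2norm d (\<lambda>k. c k - A c k))\<^sup>2 \<le> 2 + 2 * C\<^sup>2"
      using L2norm_diff_square_le[OF Wseq_square_summable[OF c(1)] Ac] by linarith
    then show ?thesis using L2norm_nonneg by (simp add: real_le_rsqrt)
  qed
  then show ?thesis unfolding bdd_above_def by blast
qed

lemma L2norm_le_op_norm_WL2:
  assumes "bounded_linear_WL2 R d A" "rank_lt_WL2 R d n A" "c \<in> Wseq R d" "Wnorm R d c \<le> 1"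
  shows "L2norm d (\<lambda>k. c k - A c k) \<le> op_norm_WL2 R d (\<lambda>c k. c k - A c k)"
  unfolding op_norm_WL2_def
  by (rule cSup_upper) (use bdd_above_op_norm_WL2[OF assms(1,2)] assms(3,4) in auto)

lemma op_norm_WL2_le:
  assumes "\<And>c. c \<in> Wseq R d \<Longrightarrow> Wnorm R d c \<le> 1 \<Longrightarrow> L2norm d (F c) \<le> \<beta>"
  shows "op_norm_WL2 R d F \<le> \<beta>"
  unfolding op_norm_WL2_def
proof (rule cSup_least)
  have "Wnorm R d (\<lambda>k. 0) \<le> 1" by (simp add: Wnorm_def)
  then show "{L2norm d (F c) |c. c \<in> Wseq R d \<and> Wnorm R d c \<le> 1} \<noteq> {}"
    using Wseq_zero by blast
qed (use assms in auto)

lemma approx_num_le_op_norm: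
  assumes "bounded_linear_WL2 R d A" "rank_lt_WL2 R d n A"
  shows "approx_num R d n \<le> op_norm_WL2 R d (\<lambda>c k. c k - A c k)"
  unfolding approx_num_def
proof (rule cInf_lower)
  have "0 \<le> op_norm_WL2 R d (\<lambda>c k. c k - A c k)"
    if "bounded_linear_WL2 R d A" "rank_lt_WL2 R d n A" for A
    using order_trans[OF L2norm_nonneg L2norm_le_op_norm_WL2[OF that Wseq_zero]]
    by (simp add: Wnorm_def)
  then show "bdd_below {op_norm_WL2 R d (\<lambda>c k. c k - A c k) | A.
      bounded_linear_WL2 R d A \<and> rank_lt_WL2 R d n A}"
    unfolding bdd_below_def by blast
qed (use assms in blast)

lemma le_approx_num:
  assumes "1 \<le> n"
    and "\<And>A. bounded_linear_WL2 R d A \<Longrightarrow> rank_lt_WL2 R d n A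
           \<Longrightarrow> \<beta> \<le> op_norm_WL2 R d (\<lambda>c k. c k - A c k)"
  shows "\<beta> \<le> approx_num R d n"
  unfolding approx_num_def
proof (rule cInf_greatest)
  let ?Z = "\<lambda>c::(nat \<Rightarrow> int) \<Rightarrow> complex. \<lambda>k::nat \<Rightarrow> int. 0::complex"
  have "bounded_linear_WL2 R d ?Z"
    unfolding bounded_linear_WL2_def by (auto simp: L2norm_def intro: exI[of _ 0])
  moreover have "rank_lt_WL2 R d n ?Z"
    unfolding rank_lt_WL2_def using assms(1) by (intro exI[of _ "{}"]) auto
  ultimately show "{op_norm_WL2 R d (\<lambda>c k. c k - A c k) | A.
      bounded_linear_WL2 R d A \<and> rank_lt_WL2 R d n A} \<noteq> {}"
    by blast
qed (use assms(2) in blast)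

definition unit_seq :: "(nat \<Rightarrow> int) \<Rightarrow> (nat \<Rightarrow> int) \<Rightarrow> complex" where
  "unit_seq k = (\<lambda>j. if j = k then 1 else 0)"

lemma sum_unit_seq:
  assumes "finite F"
  shows "(\<lambda>j. \<Sum>k\<in>F. \<gamma> k * unit_seq k j) = (\<lambda>j. if j \<in> F then \<gamma> j else 0)"
  using assms by (simp add: unit_seq_def if_distrib[of "\<lambda>x. _ * x"] sum.delta cong: if_cong)

context
  fixes d :: nat and F :: "(nat \<Rightarrow> int) set" and c :: "(nat \<Rightarrow> int) \<Rightarrow> complex"
  assumes F: "finite F" "F \<subseteq> Zd d" and supp: "\<And>j. j \<notin> F \<Longrightarrow> c j = 0"
begin

lemma finite_support_Wseq: "c \<in> Wseq R d"
  using infsum_eq_sum_finite_support(2)[OF F, where h = "\<lambda>k. sob_weight R d k * (cmod (c k))\<^sup>2"]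
    F supp
  by (auto simp: Wseq_def)

lemma Wnorm_finite_support: "(Wnorm R d c)\<^sup>2 = (\<Sum>k\<in>F. sob_weight R d k * (cmod (c k))\<^sup>2)"
  unfolding Wnorm_square using F supp by (intro infsum_eq_sum_finite_support(1)) auto

lemma L2norm_finite_support: "(L2norm d c)\<^sup>2 = (\<Sum>k\<in>F. (cmod (c k))\<^sup>2)"
  unfolding L2norm_square using F supp by (intro infsum_eq_sum_finite_support(1)) auto

end

lemma unit_seq_Wseq: "k \<in> Zd d \<Longrightarrow> unit_seq k \<in> Wseq R d"
  by (rule finite_support_Wseq[of "{k}"]) (auto simp: unit_seq_def)

lemma bounded_linear_WL2_restrict: "bounded_linear_WL2 R d (\<lambda>c k. if k \<in> S then c k else 0)"
  unfolding bounded_linear_WL2_def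
proof (intro conjI exI ballI)
  fix c assume c: "c \<in> Wseq R d"
  have sq: "(\<lambda>k. (cmod (c k))\<^sup>2) summable_on Zd d" by (rule Wseq_square_summable[OF c])
  have le: "(cmod (if k \<in> S then c k else 0))\<^sup>2 \<le> (cmod (c k))\<^sup>2" for k by simp
  have "L2norm d (\<lambda>k. if k \<in> S then c k else 0) \<le> L2norm d c"
    unfolding L2norm_def
    by (intro real_sqrt_le_mono infsum_mono sq le summable_on_comparison_test[OF sq le]) simp
  also have "\<dots> \<le> 1 * Wnorm R d c" using L2norm_le_Wnorm[OF c] by simp
  finally show "L2norm d (\<lambda>k. if k \<in> S then c k else 0) \<le> 1 * Wnorm R d c" .
qed (auto simp: fun_eq_iff)

lemma rank_lt_WL2_restrict:
  assumes S: "finite S" "S \<subseteq> Zd d" "card S < n"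
  shows "rank_lt_WL2 R d n (\<lambda>c k. if k \<in> S then c k else 0)"
  unfolding rank_lt_WL2_def
proof (intro exI[of _ "unit_seq ` S"] conjI ballI)
  have inj: "inj_on unit_seq S" by (auto simp: inj_on_def unit_seq_def fun_eq_iff)
  show "finite (unit_seq ` S)" using S by simp
  show "card (unit_seq ` S) < n" using S by (simp add: card_image[OF inj])
  show "unit_seq ` S \<subseteq> L2seq d"
  proof
    fix b assume "b \<in> unit_seq ` S"
    then have "b \<in> Wseq R d" using S unit_seq_Wseq by auto
    then show "b \<in> L2seq d" using Wseq_square_summable by (auto simp: Wseq_def L2seq_def)
  qed
  fix c :: "(nat \<Rightarrow> int) \<Rightarrow> complex"
  have "(\<lambda>k. if k \<in> S then c k else 0) = (\<lambda>j. \<Sum>k\<in>S. c k * unit_seq k j)"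
    using sum_unit_seq[OF S(1)] by simp
  also have "\<dots> = (\<lambda>j. \<Sum>b\<in>unit_seq ` S. c (inv_into S unit_seq b) * b j)"
    by (simp add: sum.reindex[OF inj] inv_into_f_f[OF inj])
  finally show "\<exists>\<alpha>. (\<lambda>k. if k \<in> S then c k else 0) = (\<lambda>k. \<Sum>b\<in>unit_seq ` S. \<alpha> b * b k)"
    by (intro exI[of _ "\<lambda>b. c (inv_into S unit_seq b)"])
qed

lemma approx_num_le_inv_sqrt:
  assumes S: "finite S" "S \<subseteq> Zd d" "card S < n" and t: "0 < t"
    and large: "\<And>k. k \<in> Zd d - S \<Longrightarrow> t \<le> sob_weight R d k"
  shows "approx_num R d n \<le> 1 / sqrt t"
proof -
  let ?P = "\<lambda>c k. if k \<in> S then c k else 0"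
  have "L2norm d (\<lambda>k. c k - ?P c k) \<le> 1 / sqrt t"
    if c: "c \<in> Wseq R d" "Wnorm R d c \<le> 1" for c
  proof -
    have sw: "(\<lambda>k. sob_weight R d k * (cmod (c k))\<^sup>2) summable_on Zd d"
      using c by (simp add: Wseq_def)
    have le: "(cmod (c k - ?P c k))\<^sup>2 \<le> 1 / t * (sob_weight R d k * (cmod (c k))\<^sup>2)"
      if "k \<in> Zd d" for k
    proof (cases "k \<in> S")
      case True
      then show ?thesis using t sob_weight_nonneg[of R d k] by simp
    next
      case False
      then have "t * (cmod (c k))\<^sup>2 \<le> sob_weight R d k * (cmod (c k))\<^sup>2"
        using large that by (intro mult_right_mono) auto
      then show ?thesis using False t by (simp add: field_simps)
    qed
    have "(L2norm d (\<lambda>k. c k - ?P c k))\<^sup>2 \<le> (\<Sum>\<^sub>\<infinity>k\<in>Zd d. 1 / t * (sob_weight R d k * (cmod (c k))\<^sup>2))"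
      unfolding L2norm_square using le
      by (intro infsum_mono summable_on_cmult_right sw
          summable_on_comparison_test[OF summable_on_cmult_right[OF sw, of "1/t"]]) auto
    also have "\<dots> = 1 / t * (Wnorm R d c)\<^sup>2"
      by (simp only: infsum_cmult_right' Wnorm_square)
    also have "\<dots> \<le> 1 / t * 1"
      using c t Wnorm_nonneg by (intro mult_left_mono power_le_one) auto
    finally have "L2norm d (\<lambda>k. c k - ?P c k) \<le> sqrt (1 / t)" by (intro real_le_rsqrt) simp
    then show ?thesis by (simp add: real_sqrt_divide)
  qed
  then have "op_norm_WL2 R d (\<lambda>c k. c k - ?P c k) \<le> 1 / sqrt t"
    by (intro op_norm_WL2_le)
  moreover have "approx_num R d n \<le> op_norm_WL2 R d (\<lambda>c k. c k - ?P c k)"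
    by (intro approx_num_le_op_norm bounded_linear_WL2_restrict rank_lt_WL2_restrict S)
  ultimately show ?thesis by linarith
qed

lemma bounded_linear_WL2_kernel_vector:
  assumes A: "bounded_linear_WL2 R d A" and rk: "rank_lt_WL2 R d n A"
    and T: "finite T" "T \<subseteq> Zd d" "n \<le> card T"
  shows "\<exists>c. (\<forall>j. j \<notin> T \<longrightarrow> c j = 0) \<and> (\<exists>k\<in>T. c k \<noteq> 0) \<and> A c = (\<lambda>_. 0)"
proof -
  obtain B where B: "finite B" "card B < n" "\<forall>c\<in>Wseq R d. \<exists>\<alpha>. A c = (\<lambda>k. \<Sum>b\<in>B. \<alpha> b * b k)"
    using rk unfolding rank_lt_WL2_def by blast
  have unit: "unit_seq k \<in> Wseq R d" if "k \<in> T" for k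
    using that T unit_seq_Wseq by auto
  define a where "a k = (SOME \<alpha>. A (unit_seq k) = (\<lambda>j. \<Sum>b\<in>B. \<alpha> b * b j))" for k
  have a: "A (unit_seq k) = (\<lambda>j. \<Sum>b\<in>B. a k b * b j)" if "k \<in> T" for k
  proof -
    have "\<exists>\<alpha>. A (unit_seq k) = (\<lambda>j. \<Sum>b\<in>B. \<alpha> b * b j)" using B(3) unit[OF that] by blast
    then show ?thesis unfolding a_def by (rule someI_ex)
  qed
  obtain \<gamma> where \<gamma>: "\<exists>k\<in>T. \<gamma> k \<noteq> 0" "\<forall>b\<in>B. (\<Sum>k\<in>T. \<gamma> k * a k b) = 0"
    using homogeneous_system_nontrivial_solution[OF B(1) T(1), of a] B(2) T(3) by auto
  define c where "c = (\<lambda>j. \<Sum>k\<in>T. \<gamma> k * unit_seq k j)"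
  have "A c = (\<lambda>j. \<Sum>k\<in>T. \<gamma> k * (\<Sum>b\<in>B. a k b * b j))"
    unfolding c_def using bounded_linear_WL2_sum[OF A T(1) unit] a by simp
  also have "\<dots> = (\<lambda>j. \<Sum>b\<in>B. (\<Sum>k\<in>T. \<gamma> k * a k b) * b j)"
    by (simp add: sum_distrib_left sum_distrib_right mult.assoc sum.swap[of _ T])
  also have "\<dots> = (\<lambda>_. 0)" using \<gamma>(2) by simp
  finally have "A c = (\<lambda>_. 0)" .
  moreover have "c = (\<lambda>j. if j \<in> T then \<gamma> j else 0)" using sum_unit_seq[OF T(1)] by (simp add: c_def)
  ultimately show ?thesis using \<gamma>(1) by (intro exI[of _ c]) auto
qed

lemma Wnorm_le_sqrt_mult_L2norm:
  assumes T: "finite T" "T \<subseteq> Zd d" and supp: "\<And>j. j \<notin> T \<Longrightarrow> c j = 0"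
    and small: "\<And>k. k \<in> T \<Longrightarrow> sob_weight R d k \<le> t"
  shows "Wnorm R d c \<le> sqrt t * L2norm d c"
proof -
  have "(Wnorm R d c)\<^sup>2 = (\<Sum>k\<in>T. sob_weight R d k * (cmod (c k))\<^sup>2)"
    by (rule Wnorm_finite_support[OF T supp])
  also have "\<dots> \<le> (\<Sum>k\<in>T. t * (cmod (c k))\<^sup>2)"
    using small by (intro sum_mono mult_right_mono) auto
  also have "\<dots> = t * (L2norm d c)\<^sup>2"
    by (simp add: L2norm_finite_support[OF T supp] sum_distrib_left)
  finally have "Wnorm R d c \<le> sqrt (t * (L2norm d c)\<^sup>2)" by (rule real_le_rsqrt)
  then show ?thesis by (simp add: real_sqrt_mult L2norm_nonneg)
qed

lemma inv_sqrt_le_approx_num: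
  assumes T: "finite T" "T \<subseteq> Zd d" "n \<le> card T" and n: "1 \<le> n"
    and small: "\<And>k. k \<in> T \<Longrightarrow> sob_weight R d k \<le> t"
  shows "1 / sqrt t \<le> approx_num R d n"
proof (rule le_approx_num[OF n])
  fix A assume A: "bounded_linear_WL2 R d A" and rk: "rank_lt_WL2 R d n A"
  obtain c where supp: "\<And>j. j \<notin> T \<Longrightarrow> c j = 0" and "\<exists>k\<in>T. c k \<noteq> 0" and Ac: "A c = (\<lambda>_. 0)"
    using bounded_linear_WL2_kernel_vector[OF A rk T] by blast
  then obtain k0 where k0: "k0 \<in> T" "c k0 \<noteq> 0" by blast
  have c: "c \<in> Wseq R d" by (rule finite_support_Wseq[OF T(1,2) supp])
  define N where "N = Wnorm R d c"
  have "0 < sob_weight R d k0 * (cmod (c k0))\<^sup>2"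
    using k0 order.strict_trans2[OF zero_less_one sob_weight_ge_one] by simp
  also have "\<dots> \<le> (\<Sum>k\<in>T. sob_weight R d k * (cmod (c k))\<^sup>2)"
    using k0 T by (intro member_le_sum) (auto simp: sob_weight_nonneg)
  also have "\<dots> = N\<^sup>2"
    unfolding N_def by (rule Wnorm_finite_support[OF T(1,2) supp, symmetric])
  finally have N: "0 < N" using Wnorm_nonneg[of R d c] by (simp add: N_def)
  have "0 < t" using small[OF k0(1)] sob_weight_ge_one[of R d k0] by linarith
  define c1 where "c1 = (\<lambda>k. complex_of_real (1 / N) * c k)"
  have "A c1 = (\<lambda>k. complex_of_real (1 / N) * A c k)"
    unfolding c1_def by (rule bounded_linear_WL2_scale[OF A c])
  then have Ac1: "A c1 = (\<lambda>_. 0)" using Ac by simp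
  have "1 / sqrt t = N / sqrt t / N" using N by simp
  also have "\<dots> \<le> L2norm d c / N"
    using Wnorm_le_sqrt_mult_L2norm[OF T(1,2) supp small] \<open>0 < t\<close> N
    by (intro divide_right_mono) (auto simp: N_def field_simps)
  also have "\<dots> = L2norm d c1"
    unfolding c1_def L2norm_scale using N by (simp add: norm_divide)
  also have "\<dots> = L2norm d (\<lambda>k. c1 k - A c1 k)"
    by (simp add: Ac1)
  also have "\<dots> \<le> op_norm_WL2 R d (\<lambda>c k. c k - A c k)"
  proof (rule L2norm_le_op_norm_WL2[OF A rk])
    show "c1 \<in> Wseq R d"
      using Wseq_lincomb[OF c c, of "complex_of_real (1 / N)" 0] by (simp add: c1_def)
    show "Wnorm R d c1 \<le> 1"
      unfolding c1_def Wnorm_scale using N by (simp add: N_def norm_divide)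
  qed
  finally show "1 / sqrt t \<le> op_norm_WL2 R d (\<lambda>c k. c k - A c k)" .
qed

section \<open>Counting lattice points\<close>

definition int_box :: "nat \<Rightarrow> (nat \<Rightarrow> nat) \<Rightarrow> (nat \<Rightarrow> int) set" where
  "int_box d M = {k \<in> Zd d. \<forall>j<d. \<bar>k j\<bar> \<le> int (M j)}"

lemma int_box_eq_image_PiE:
  "int_box d M = (\<lambda>f j. if j < d then f j else 0) ` PiE {..<d} (\<lambda>j. {- int (M j)..int (M j)})"
proof (intro equalityI subsetI)
  fix k assume k: "k \<in> int_box d M"
  then have "restrict k {..<d} \<in> PiE {..<d} (\<lambda>j. {- int (M j)..int (M j)})"
    by (auto simp: int_box_def restrict_PiE_iff Pi_iff abs_le_iff)
  moreover have "k = (\<lambda>j. if j < d then restrict k {..<d} j else 0)"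
    using k by (force simp: int_box_def Zd_def)
  ultimately show "k \<in> (\<lambda>f j. if j < d then f j else 0) ` PiE {..<d} (\<lambda>j. {- int (M j)..int (M j)})"
    by blast
next
  fix k assume "k \<in> (\<lambda>f j. if j < d then f j else 0) ` PiE {..<d} (\<lambda>j. {- int (M j)..int (M j)})"
  then obtain f where f: "f \<in> PiE {..<d} (\<lambda>j. {- int (M j)..int (M j)})"
    and k: "k = (\<lambda>j. if j < d then f j else 0)" by blast
  have "\<bar>f j\<bar> \<le> int (M j)" if "j < d" for j
    using PiE_mem[OF f, of j] that by (simp add: abs_le_iff)
  then show "k \<in> int_box d M" by (simp add: int_box_def Zd_def k)
qed

lemma inj_on_extend_zero: "inj_on (\<lambda>f j. if j < d then f j else 0) (PiE {..<d} S)"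
proof (rule inj_onI)
  fix f g assume fg: "f \<in> PiE {..<d} S" "g \<in> PiE {..<d} S"
    and eq: "(\<lambda>j. if j < d then f j else 0) = (\<lambda>j. if j < d then g j else 0)"
  show "f = g"
  proof (rule PiE_ext[OF fg])
    fix i assume "i \<in> {..<d}"
    then show "f i = g i" using fun_cong[OF eq, of i] by simp
  qed
qed

lemma finite_int_box: "finite (int_box d M)"
  unfolding int_box_eq_image_PiE by (intro finite_imageI finite_PiE) auto

lemma card_int_box: "card (int_box d M) = (\<Prod>j<d. 2 * M j + 1)"
  unfolding int_box_eq_image_PiE card_image[OF inj_on_extend_zero]
  by (simp add: card_PiE nat_add_distrib nat_mult_distrib)

lemma sum_prod_int_box:
  fixes f :: "nat \<Rightarrow> int \<Rightarrow> 'a::comm_semiring_1"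
  shows
  "(\<Sum>k\<in>int_box d M. \<Prod>j<d. f j (k j)) = (\<Prod>j<d. \<Sum>m\<in>{- int (M j)..int (M j)}. f j m)"
proof -
  let ?B = "PiE {..<d} (\<lambda>j. {- int (M j)..int (M j)})"
  have "(\<Sum>k\<in>int_box d M. \<Prod>j<d. f j (k j)) = (\<Sum>x\<in>?B. \<Prod>j<d. f j (if j < d then x j else 0))"
    unfolding int_box_eq_image_PiE sum.reindex[OF inj_on_extend_zero] by simp
  also have "\<dots> = (\<Sum>x\<in>?B. \<Prod>j<d. f j (x j))"
    by (intro sum.cong refl prod.cong) auto
  also have "\<dots> = (\<Prod>j<d. \<Sum>m\<in>{- int (M j)..int (M j)}. f j m)"
    by (rule prod_sum_PiE[symmetric]) auto
  finally show ?thesis .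
qed

lemma sublevel_set_subset_int_box:
  fixes a :: "nat \<Rightarrow> real" and s :: real
  assumes a: "\<forall>j<d. 0 < a j"
  shows "{k \<in> Zd d. (\<Sum>j<d. \<bar>real_of_int (k j)\<bar> powr a j) < s}
           \<subseteq> int_box d (\<lambda>j. nat \<lceil>s powr (1 / a j)\<rceil>)"
proof
  fix k assume k: "k \<in> {k \<in> Zd d. (\<Sum>j<d. \<bar>real_of_int (k j)\<bar> powr a j) < s}"
  have "\<bar>k j\<bar> \<le> int (nat \<lceil>s powr (1 / a j)\<rceil>)" if j: "j < d" for j
  proof -
    have aj: "0 < a j" using a j by simp
    have "\<bar>real_of_int (k j)\<bar> powr a j \<le> (\<Sum>j<d. \<bar>real_of_int (k j)\<bar> powr a j)"
      using j by (intro member_le_sum) auto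
    then have "\<bar>real_of_int (k j)\<bar> powr a j \<le> s" using k by simp
    moreover have "\<bar>real_of_int (k j)\<bar> = (\<bar>real_of_int (k j)\<bar> powr a j) powr (1 / a j)"
      using aj by (simp add: powr_powr)
    ultimately have "\<bar>real_of_int (k j)\<bar> \<le> s powr (1 / a j)"
      using aj by (metis powr_mono2 powr_ge_zero less_eq_real_def zero_le_divide_1_iff)
    then show ?thesis by linarith
  qed
  then show "k \<in> int_box d (\<lambda>j. nat \<lceil>s powr (1 / a j)\<rceil>)" using k by (simp add: int_box_def)
qed

lemma card_sublevel_set_le:
  fixes a :: "nat \<Rightarrow> real" and s lam :: real
  assumes a: "\<forall>j<d. 0 < a j" and lam: "0 < lam"
  defines "S \<equiv> {k \<in> Zd d. (\<Sum>j<d. \<bar>real_of_int (k j)\<bar> powr a j) < s}"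
  shows "finite S"
    and "real (card S) \<le> exp (lam * s) * (\<Prod>j<d. 1 + 2 * exp_sum_const (a j) * lam powr (-(1 / a j)))"
proof -
  define t where "t k = (\<Sum>j<d. \<bar>real_of_int (k j)\<bar> powr a j)" for k :: "nat \<Rightarrow> int"
  define M where "M j = nat \<lceil>s powr (1 / a j)\<rceil>" for j
  have sub: "S \<subseteq> int_box d M"
    unfolding S_def M_def by (rule sublevel_set_subset_int_box[OF a])
  then show "finite S" using finite_int_box finite_subset by blast
  have "real (card S) = (\<Sum>k\<in>S. 1)" by simp
  also have "\<dots> \<le> (\<Sum>k\<in>S. exp (lam * (s - t k)))"
    using lam by (intro sum_mono) (auto simp: S_def t_def)
  also have "\<dots> \<le> (\<Sum>k\<in>int_box d M. exp (lam * (s - t k)))"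
    using sub by (intro sum_mono2 finite_int_box) auto
  also have "\<dots> = exp (lam * s) * (\<Sum>k\<in>int_box d M. \<Prod>j<d. exp (-(lam * \<bar>real_of_int (k j)\<bar> powr a j)))"
    unfolding sum_distrib_left
  proof (intro sum.cong refl)
    fix k :: "nat \<Rightarrow> int"
    have "exp (lam * (s - t k)) = exp (lam * s) * exp (-(\<Sum>j<d. lam * \<bar>real_of_int (k j)\<bar> powr a j))"
      by (simp add: t_def sum_distrib_left right_diff_distrib exp_diff exp_minus field_simps)
    also have "exp (-(\<Sum>j<d. lam * \<bar>real_of_int (k j)\<bar> powr a j))
        = (\<Prod>j<d. exp (-(lam * \<bar>real_of_int (k j)\<bar> powr a j)))"
      by (simp add: exp_sum sum_negf[symmetric])
    finally show "exp (lam * (s - t k)) = exp (lam * s) * (\<Prod>j<d. exp (-(lam * \<bar>real_of_int (k j)\<bar> powr a j)))" .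
  qed
  also have "\<dots> = exp (lam * s) * (\<Prod>j<d. \<Sum>m\<in>{- int (M j)..int (M j)}. exp (-(lam * \<bar>real_of_int m\<bar> powr a j)))"
    using sum_prod_int_box[of "\<lambda>j m. exp (-(lam * \<bar>real_of_int m\<bar> powr a j))" d M] by simp
  also have "\<dots> \<le> exp (lam * s) * (\<Prod>j<d. 1 + 2 * exp_sum_const (a j) * lam powr (-(1 / a j)))"
    using a lam by (intro mult_left_mono prod_mono conjI sum_exp_neg_abs_powr_le sum_nonneg) auto
  finally show "real (card S) \<le> exp (lam * s) * (\<Prod>j<d. 1 + 2 * exp_sum_const (a j) * lam powr (-(1 / a j)))" .
qed

lemma one_dim_factor_lt:
  fixes p u v r lam Q :: real
  assumes v: "0 < v" and vr: "v \<le> r" and ru: "r \<le> u" and pu: "u \<le> p" and p: "1/2 \<le> p"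
    and lam: "0 < lam" and Q: "2 powr (4 * p + 2 * u) < Q"
    and K: "2 powr (2 * (p + u)) * (2 + 1 / (2 * v)) powr (u / v) \<le> lam * Q"
  shows "1 + 2 * exp_sum_const (2 * r) * lam powr (-(1 / (2 * r))) < Q powr (1 / (2 * r))"
proof -
  define x where "x = 1 / (2 * r)"
  have x: "0 < x" "1 / (2 * u) \<le> x" "x \<le> 1 / (2 * v)" "1 / x = 2 * r"
    using v vr ru by (auto simp: x_def intro!: divide_left_mono)
  have Q0: "0 < Q" using Q by (smt (verit) powr_gt_zero)
  have "2 * exp_sum_const (2 * r) \<le> 7/8 * (2 powr (2 * (p + u)) * (2 + 1 / (2 * v)) powr (u / v)) powr x"
    using two_exp_sum_const_le[OF v order.trans[OF vr ru] pu p x(2,3)] x(4) by simp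
  also have "\<dots> \<le> 7/8 * (lam * Q) powr x"
    using K x by (intro mult_left_mono powr_mono2) auto
  finally have "2 * exp_sum_const (2 * r) * lam powr (-x) \<le> 7/8 * Q powr x"
    using lam Q0 by (simp add: powr_mult powr_minus field_simps)
  moreover have "8 < Q powr x"
  proof -
    have "(2::real) powr 3 \<le> 2 powr ((4 * p + 2 * u) * x)"
    proof (intro powr_mono)
      have "(4 * p + 2 * u) * (1 / (2 * u)) \<le> (4 * p + 2 * u) * x"
        using x v vr ru pu by (intro mult_left_mono) auto
      moreover have "3 \<le> (4 * p + 2 * u) * (1 / (2 * u))"
        using pu v vr ru by (simp add: field_simps)
      ultimately show "3 \<le> (4 * p + 2 * u) * x" by linarith
    qed simp
    also have "\<dots> = (2 powr (4 * p + 2 * u)) powr x" by (simp add: powr_powr)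
    also have "\<dots> < Q powr x" using Q x by (intro powr_less_mono2) auto
    finally show ?thesis by simp
  qed
  ultimately show ?thesis by (simp add: x_def)
qed

lemma sum_half_inverse_bounds:
  fixes R :: "nat \<Rightarrow> real"
  assumes v: "0 < v" and R: "\<forall>j<d. v \<le> R j \<and> R j \<le> u"
  shows "real d / (2 * u) \<le> (\<Sum>j<d. 1 / (2 * R j))" "(\<Sum>j<d. 1 / (2 * R j)) \<le> real d / (2 * v)"
proof -
  have "(\<Sum>j<d. 1 / (2 * u)) \<le> (\<Sum>j<d. 1 / (2 * R j))"
    using R v by (intro sum_mono divide_left_mono) (auto intro: mult_pos_pos)
  moreover have "(\<Sum>j<d. 1 / (2 * R j)) \<le> (\<Sum>j<d. 1 / (2 * v))"
    using R v by (intro sum_mono divide_left_mono) auto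
  ultimately show "real d / (2 * u) \<le> (\<Sum>j<d. 1 / (2 * R j))" "(\<Sum>j<d. 1 / (2 * R j)) \<le> real d / (2 * v)"
    by simp_all
qed

lemma card_sublevel_set_lt:
  fixes R :: "nat \<Rightarrow> real" and d n :: nat and u v p s :: real
  assumes d: "1 \<le> d" and v: "0 < v" and R: "\<forall>j<d. v \<le> R j \<and> R j \<le> u"
    and pu: "u \<le> p" and p: "1/2 \<le> p" and s: "0 < s"
  defines "D \<equiv> (\<Sum>j<d. 1 / (2 * R j))"
  defines "Q \<equiv> real n powr (1 / D) / exp 1"
  assumes Q: "2 powr (4 * p + 2 * u) < Q"
    and K: "2 powr (2 * (p + u)) * (2 + 1 / (2 * v)) powr (u / v) \<le> D / s * Q"
  defines "S \<equiv> {k \<in> Zd d. (\<Sum>j<d. \<bar>real_of_int (k j)\<bar> powr (2 * R j)) < s}"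
  shows "finite S" "card S < n"
proof -
  have R0: "\<forall>j<d. 0 < R j" using R v by force
  have "0 \<in> {..<d}" using d by simp
  then have D: "0 < D" unfolding D_def using R0 by (intro sum_pos) auto
  \<comment> \<open>with this choice e^(\<lambda> s) = e^D cancels against Q^D = n / e^D\<close>
  define lam where "lam = D / s"
  have lam: "0 < lam" using D s by (simp add: lam_def)
  have Q0: "0 < Q" using Q by (smt (verit) powr_gt_zero)
  then have n: "0 < real n" by (cases "n = 0") (auto simp: Q_def)
  note card =
    card_sublevel_set_le[where d = d and a = "\<lambda>j. 2 * R j" and s = s and lam = lam, folded S_def]
  show "finite S" using card(1) R0 s lam by simp
  have "real (card S) \<le> exp (lam * s) * (\<Prod>j<d. 1 + 2 * exp_sum_const (2 * R j) * lam powr (-(1 / (2 * R j))))"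
    using card(2) R0 s lam by simp
  also have "\<dots> < exp (lam * s) * (\<Prod>j<d. Q powr (1 / (2 * R j)))"
  proof -
    have factor: "0 \<le> 1 + 2 * exp_sum_const (2 * R j) * lam powr (-(1 / (2 * R j)))"
      "1 + 2 * exp_sum_const (2 * R j) * lam powr (-(1 / (2 * R j))) < Q powr (1 / (2 * R j))"
      if "j < d" for j
    proof -
      have j: "v \<le> R j" "R j \<le> u" using R that by auto
      show "0 \<le> 1 + 2 * exp_sum_const (2 * R j) * lam powr (-(1 / (2 * R j)))"
        using exp_sum_const_ge_one[of "2 * R j"] v j by simp
      show "1 + 2 * exp_sum_const (2 * R j) * lam powr (-(1 / (2 * R j))) < Q powr (1 / (2 * R j))"
        using one_dim_factor_lt[OF v j pu p lam Q] K by (simp add: lam_def)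
    qed
    show ?thesis
      using factor Q0 d
      by (intro mult_strict_left_mono prod_mono_strict[OF \<open>0 \<in> {..<d}\<close>]) (auto intro: less_imp_le)
  qed
  also have "\<dots> = exp D * Q powr D"
    using s Q0 by (simp add: lam_def D_def powr_sum)
  also have "Q powr D = (real n powr (1 / D)) powr D / exp 1 powr D"
    using n by (simp add: Q_def powr_divide)
  also have "\<dots> = real n / exp D"
    using D n by (simp add: powr_powr exp_powr_real)
  finally show "card S < n" by simp
qed

lemma upper_const_square_ge:
  fixes u v p D :: real
  assumes v: "0 < v" and u: "0 < u" and d: "1 \<le> d" and D: "real d / (2 * u) \<le> D"
  shows "2 powr (2 * (p + u)) * (2 + 1 / (2 * v)) powr (u / v)
    \<le> D * (2 powr (p + u) * (1 + (2 * v + 1) / (2 * v)) powr (u / (2 * v))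
              * sqrt (2 * exp 1 * u / real d))\<^sup>2 / exp 1"
proof -
  define K0 where "K0 = 2 powr (2 * (p + u)) * (2 + 1 / (2 * v)) powr (u / v)"
  have "1 + (2 * v + 1) / (2 * v) = 2 + 1 / (2 * v)" using v by (simp add: field_simps)
  moreover have "2 * (u / (2 * v)) = u / v" by simp
  ultimately have "D * (2 powr (p + u) * (1 + (2 * v + 1) / (2 * v)) powr (u / (2 * v))
              * sqrt (2 * exp 1 * u / real d))\<^sup>2 / exp 1 = K0 * (2 * u * D / real d)"
    using u d by (simp add: K0_def power_mult_distrib powr_square field_simps)
  moreover have "K0 * 1 \<le> K0 * (2 * u * D / real d)"
    using D u d by (intro mult_left_mono) (auto simp: K0_def field_simps)
  ultimately show ?thesis by (simp add: K0_def)
qed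

lemma approx_num_upper_bound:
  fixes R :: "nat \<Rightarrow> real" and d n :: nat and u v p :: real
  assumes d: "1 \<le> d" and v: "0 < v" and R: "\<forall>j<d. v \<le> R j \<and> R j \<le> u"
    and pu: "u \<le> p" and p: "1/2 \<le> p"
    and n: "real n > (4 powr (p / v) * 2 powr (u / v) * (1 + 1 / (2 * v)) powr (u / (2 * v^2))
                        * (2 * exp 1 * p) powr (1 / (2 * v))) ^ d"
  shows "real n powr (1 / (\<Sum>j<d. 1 / R j)) * approx_num R d n
           \<le> 2 powr (p + u) * (1 + (2 * v + 1) / (2 * v)) powr (u / (2 * v))
              * sqrt (2 * exp 1 * u / real d)" (is "?lhs \<le> _")
proof -
  define UB where "UB = 2 powr (p + u) * (1 + (2 * v + 1) / (2 * v)) powr (u / (2 * v))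
                         * sqrt (2 * exp 1 * u / real d)"
  define D where "D = (\<Sum>j<d. 1 / (2 * R j))"
  define g where "g = 1 / (\<Sum>j<d. 1 / R j)"
  have vu: "v \<le> u" and u: "0 < u" using R v d by force+
  have Du: "real d / (2 * u) \<le> D" and Dv: "D \<le> real d / (2 * v)"
    using sum_half_inverse_bounds[OF v R] by (simp_all add: D_def)
  have "0 < real d / (2 * u)" using d u by simp
  then have D: "0 < D" using Du by linarith
  have g': "g = 1 / (2 * D)" by (simp add: g_def D_def sum_distrib_left)
  then have g: "2 * g = 1 / D" by simp
  have "v \<le> g * real d" using Dv D v by (simp add: g' field_simps)
  moreover have "0 < g" using D by (simp add: g')
  ultimately have "exp 1 * 2 powr (4 * p + 2 * u) < real n powr (2 * g)"
    using threshold_powr_gt[OF v vu pu p _ _ n] by blast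
  then have "exp 1 * 2 powr (4 * p + 2 * u) < real n powr (1 / D)" by (simp only: g)
  then have Q: "2 powr (4 * p + 2 * u) < real n powr (1 / D) / exp 1"
    by (simp add: field_simps)
  then have n0: "0 < real n" by (cases "n = 0") auto
  have "0 < 1 + (2 * v + 1) / (2 * v)" "0 < 2 * exp 1 * u / real d"
    using v u d by (auto intro!: add_pos_pos divide_pos_pos)
  then have UB: "0 < UB" by (simp add: UB_def)
  define s where "s = (real n powr g / UB)\<^sup>2"
  have s: "0 < s" using UB n0 by (simp add: s_def)
  have "D / s * (real n powr (1 / D) / exp 1) = D * UB\<^sup>2 / exp 1"
    using n0 UB by (simp add: s_def power_divide powr_square flip: g)
  then have K: "2 powr (2 * (p + u)) * (2 + 1 / (2 * v)) powr (u / v)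
      \<le> D / s * (real n powr (1 / D) / exp 1)"
    using upper_const_square_ge[OF v u d Du, of p] by (simp add: UB_def)
  note card = card_sublevel_set_lt[OF d v R pu p s, folded D_def, OF Q K]
  have "approx_num R d n \<le> 1 / sqrt (1 + s)"
    using card s by (intro approx_num_le_inv_sqrt) (auto simp: sob_weight_def)
  also have "\<dots> \<le> 1 / sqrt s" using s by (intro divide_left_mono) auto
  finally have "?lhs \<le> real n powr g * (1 / sqrt s)"
    unfolding g_def by (rule mult_left_mono) simp
  also have "sqrt s = real n powr g / UB" using UB by (simp add: s_def)
  also have "real n powr g * (1 / (real n powr g / UB)) = UB" using n0 by simp
  finally show ?thesis by (simp only: UB_def)
qed

lemma prod_le_card_int_box:
  fixes x :: "nat \<Rightarrow> real"
  assumes x: "\<forall>j<d. 1 \<le> x j"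
  shows "(\<Prod>j<d. x j) \<le> real (card (int_box d (\<lambda>j. nat \<lfloor>x j\<rfloor>)))"
proof -
  have "(\<Prod>j<d. x j) \<le> (\<Prod>j<d. real (2 * nat \<lfloor>x j\<rfloor> + 1))"
  proof (intro prod_mono conjI)
    fix j assume "j \<in> {..<d}"
    then have "1 \<le> x j" using x by simp
    then have "real (2 * nat \<lfloor>x j\<rfloor> + 1) = 2 * real_of_int \<lfloor>x j\<rfloor> + 1" by simp
    moreover have "x j < real_of_int \<lfloor>x j\<rfloor> + 1" using floor_correct[of "x j"] by simp
    ultimately show "x j \<le> real (2 * nat \<lfloor>x j\<rfloor> + 1)" using \<open>1 \<le> x j\<close> by linarith
  qed (use x in force)
  then show ?thesis by (simp only: card_int_box of_nat_prod)
qed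

lemma sob_weight_le_on_int_box:
  fixes R x :: "nat \<Rightarrow> real"
  assumes R: "\<forall>j<d. 0 < R j" and x: "\<forall>j<d. 0 \<le> x j \<and> x j powr (2 * R j) \<le> N"
    and k: "k \<in> int_box d (\<lambda>j. nat \<lfloor>x j\<rfloor>)"
  shows "sob_weight R d k \<le> 1 + real d * N"
proof -
  have "\<bar>real_of_int (k j)\<bar> powr (2 * R j) \<le> N" if j: "j < d" for j
  proof -
    have "\<bar>k j\<bar> \<le> \<lfloor>x j\<rfloor>" using k j x by (auto simp: int_box_def)
    then have "\<bar>real_of_int (k j)\<bar> \<le> x j" by (simp add: le_floor_iff)
    then have "\<bar>real_of_int (k j)\<bar> powr (2 * R j) \<le> x j powr (2 * R j)"
      using R j by (intro powr_mono2) auto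
    then show ?thesis using x j by fastforce
  qed
  then have "(\<Sum>j<d. \<bar>real_of_int (k j)\<bar> powr (2 * R j)) \<le> (\<Sum>j<d. N)"
    by (intro sum_mono) auto
  then show ?thesis by (simp add: sob_weight_def)
qed

lemma inv_sqrt_one_plus_le:
  fixes N :: real
  assumes N: "1 \<le> N"
  shows "1 / sqrt (1 + real d) \<le> N * (1 / sqrt (1 + real d * N\<^sup>2))"
proof -
  have t: "0 < 1 + real d * N\<^sup>2" by (simp add: add_pos_nonneg)
  have "1 * (1 + real d * N\<^sup>2) \<le> N\<^sup>2 * (1 + real d)"
    using N one_le_power[OF N, of 2] by (simp add: algebra_simps)
  then have "1 / (1 + real d) \<le> N\<^sup>2 / (1 + real d * N\<^sup>2)"
    using t by (simp add: divide_le_eq le_divide_eq mult.commute)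
  then have "sqrt (1 / (1 + real d)) \<le> sqrt ((N * (1 / sqrt (1 + real d * N\<^sup>2)))\<^sup>2)"
    using t by (simp add: power_divide power_mult_distrib)
  then show ?thesis using N t by (simp add: real_sqrt_divide)
qed

lemma approx_num_lower_bound:
  fixes R :: "nat \<Rightarrow> real" and d n :: nat
  assumes d: "1 \<le> d" and R: "\<forall>j<d. 0 < R j" and n: "1 \<le> n"
  shows "1 / sqrt (1 + real d) \<le> real n powr (1 / (\<Sum>j<d. 1 / R j)) * approx_num R d n"
proof -
  define g where "g = 1 / (\<Sum>j<d. 1 / R j)"
  define x where "x j = real n powr (g / R j)" for j
  have "0 \<in> {..<d}" using d by simp
  then have "0 < (\<Sum>j<d. 1 / R j)" using R by (intro sum_pos) auto
  moreover have "(\<Sum>j<d. g / R j) = g * (\<Sum>j<d. 1 / R j)" by (simp add: sum_distrib_left)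
  ultimately have g: "0 < g" "(\<Sum>j<d. g / R j) = 1" by (simp_all add: g_def)
  have x: "\<forall>j<d. 1 \<le> x j \<and> x j powr (2 * R j) = real n powr (2 * g)"
  proof (intro allI impI conjI)
    fix j assume j: "j < d"
    show "1 \<le> x j" unfolding x_def using n g R j by (intro ge_one_powr_ge_zero) auto
    have "R j \<noteq> 0" using R j by auto
    then have "g / R j * (2 * R j) = 2 * g" by simp
    then show "x j powr (2 * R j) = real n powr (2 * g)" by (simp add: x_def powr_powr)
  qed
  have "real n = (\<Prod>j<d. x j)"
    using n g(2) by (simp add: x_def powr_sum[symmetric])
  then have card: "n \<le> card (int_box d (\<lambda>j. nat \<lfloor>x j\<rfloor>))"
    using prod_le_card_int_box[of d x] x by simp
  have "sob_weight R d k \<le> 1 + real d * real n powr (2 * g)"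
    if "k \<in> int_box d (\<lambda>j. nat \<lfloor>x j\<rfloor>)" for k
    by (rule sob_weight_le_on_int_box[OF R _ that]) (use x in force)
  then have "1 / sqrt (1 + real d * real n powr (2 * g)) \<le> approx_num R d n"
    by (intro inv_sqrt_le_approx_num[OF finite_int_box _ card n]) (auto simp: int_box_def)
  then have "real n powr g * (1 / sqrt (1 + real d * (real n powr g)\<^sup>2))
      \<le> real n powr g * approx_num R d n"
    by (intro mult_left_mono) (simp_all add: powr_square)
  moreover have "1 \<le> real n powr g" using n g by (intro ge_one_powr_ge_zero) auto
  ultimately show ?thesis
    using inv_sqrt_one_plus_le[of "real n powr g" d] by (simp add: g_def)
qed

theorem lemma3p5:
  fixes R :: "nat \<Rightarrow> real" and d :: nat and n :: nat
  assumes "d \<ge> 1"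
    and "\<forall>j<d. R j > 0"
  defines "u \<equiv> Max (R ` {..<d})"
    and "v \<equiv> Min (R ` {..<d})"
  defines "p \<equiv> max (1/2) u"
    and "g \<equiv> 1 / (\<Sum>j<d. 1 / R j)"
  defines "E \<equiv> 4 powr (p / v) * 2 powr (u / v) * (1 + 1 / (2 * v)) powr (u / (2 * v^2))
               * (2 * exp 1 * p) powr (1 / (2 * v))"
  assumes "real n > E ^ d"
  shows "2 powr (v - p) * sqrt (1 / (exp 1 * (real d + 2 * u)))
           \<le> real n powr g * approx_num R d n
       \<and> real n powr g * approx_num R d n
           \<le> 2 powr (p + u) * (1 + (2 * v + 1) / (2 * v)) powr (u / (2 * v))
              * sqrt (2 * exp 1 * u / real d)"
proof
  have "0 \<in> {..<d}" using assms(1) by simp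
  then have fin: "finite (R ` {..<d})" and ne: "R ` {..<d} \<noteq> {}" by auto
  have R: "\<forall>j<d. v \<le> R j \<and> R j \<le> u" using fin by (simp add: u_def v_def)
  have v: "0 < v" using Min_in[OF fin ne] assms(2) by (auto simp: v_def)
  have vu: "v \<le> u" and pu: "u \<le> p" and p: "1/2 \<le> p"
    using R \<open>0 \<in> {..<d}\<close> by (auto simp: p_def)
  show "real n powr g * approx_num R d n
      \<le> 2 powr (p + u) * (1 + (2 * v + 1) / (2 * v)) powr (u / (2 * v)) * sqrt (2 * exp 1 * u / real d)"
    unfolding g_def using approx_num_upper_bound[OF assms(1) v R pu p] \<open>E ^ d < real n\<close>
    by (simp add: E_def)
  have "0 \<le> E" by (simp add: E_def)
  then have n: "1 \<le> n" using \<open>E ^ d < real n\<close> by (cases "n = 0") auto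
  have "2 powr (v - p) * sqrt (1 / (exp 1 * (real d + 2 * u))) \<le> 1 * sqrt (1 / (1 + real d))"
  proof (intro mult_mono real_sqrt_le_mono divide_left_mono)
    show "(2::real) powr (v - p) \<le> 1" using powr_mono[of "v - p" 0 2] vu pu by simp
    have "1 + real d \<le> 2 * (real d + 2 * u)" using v vu assms(1) by simp
    also have "\<dots> \<le> exp 1 * (real d + 2 * u)"
      using exp_one_gt_27_10 v vu by (intro mult_right_mono) auto
    finally show "1 + real d \<le> exp 1 * (real d + 2 * u)" .
  qed (use v vu in auto)
  also have "\<dots> \<le> real n powr g * approx_num R d n"
    unfolding g_def using approx_num_lower_bound[OF assms(1,2) n] by (simp add: real_sqrt_divide)
  finally show "2 powr (v - p) * sqrt (1 / (exp 1 * (real d + 2 * u))) \<le> real n powr g * approx_num R d n"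
    by simp
qed

end
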